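(* For $k\ge 3$ let $g_k(x)=\sum_{n\ge0}|S_n(123,\,(k-1)(k-2)\cdots 21(k+1)k)|\,x^n$ (the $n=0$ term being $1$). Then $g_3(x)=\frac{1-2x}{1-3x+x^2}$ (so $|S_n(123,2143)|$ is $1,1,2,5,13,34,\dots$), and for every $k\ge 4$, $$g_k(x)=\frac{1}{1-x\,g_{k-1}(x)}.$$ *)

theory Defs
  imports "HOL-Computational_Algebra.Formal_Power_Series"
begin

definition perms_of :: "nat \<Rightarrow> nat list set" where
  "perms_of n = {s. distinct s \<and> set s = {1..n}}"

definition contains_pattern :: "nat list \<Rightarrow> nat list \<Rightarrow> bool" where
  "contains_pattern s p \<longleftrightarrow>
     (\<exists>idx. length idx = length p \<and> sorted_wrt (<) idx \<and> (\<forall>i\<in>set idx. i < length s) \<and>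
        (\<forall>a b. a < length p \<longrightarrow> b < length p \<longrightarrow>
           (s ! (idx ! a) < s ! (idx ! b) \<longleftrightarrow> p ! a < p ! b)))"

definition avoids :: "nat list \<Rightarrow> nat list \<Rightarrow> bool" where
  "avoids s p \<longleftrightarrow> \<not> contains_pattern s p"

definition tau :: "nat \<Rightarrow> nat list" where
  "tau k = rev [1..<k] @ [k + 1, k]"

definition Sn :: "nat \<Rightarrow> nat \<Rightarrow> nat list set" where
  "Sn k n = {s \<in> perms_of n. avoids s [1,2,3] \<and> avoids s (tau k)}"

definition gk :: "nat \<Rightarrow> rat fps" where
  "gk k = Abs_fps (\<lambda>n. of_nat (card (Sn k n)))"

end

(*
  Put h = k - 2. In a 123-avoiding permutation s, the entries left of position a that are smaller
  than a later entry s_b < s_a are decreasing. So an occurrence of (k-1)...21(k+1)k is the same as an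
  inversion s_a > s_b with at least k - 1 entries s_p < s_b, p < a, and g_k counts the 123-avoiders
  in which every inversion has at most h such entries (the h-bounded ones).

  Both conditions pass to and from the summands of a skew sum, and every permutation is uniquely a
  skew sum whose first summand is skew-indecomposable. For the generating functions A_h of the
  h-bounded permutations and I_h of the skew-indecomposable ones this gives A_h = 1 + I_h A_h.
  Deleting the first entry of a skew-indecomposable 123-avoider and moving the value of each
  left-to-right minimum to the next one is a bijection onto the 123-avoiders of one size less, and
  it lowers the bound by exactly one. Hence I_(h+1) = x A_h and A_(h+1) = 1 / (1 - x A_h). Finally,
  the only skew-indecomposable 0-bounded permutation of size m is (m-1)...21m, so
  A_0 = (1 - x) / (1 - 2x) and g_3 = A_1 = (1 - 2x) / (1 - 3x + x^2).
*)
theory Submission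
  imports Defs
begin

section \<open>Permutations in one-line notation\<close>

lemma perms_of_length: "s \<in> perms_of n \<Longrightarrow> length s = n"
  unfolding perms_of_def by (metis (mono_tags, lifting) card_atLeastAtMost diff_Suc_1 distinct_card mem_Collect_eq)

lemma perms_of_distinct: "s \<in> perms_of n \<Longrightarrow> distinct s"
  unfolding perms_of_def by simp

lemma perms_of_nth_bounds: "s \<in> perms_of n \<Longrightarrow> i < n \<Longrightarrow> 1 \<le> s!i \<and> s!i \<le> n"
  using nth_mem[of i s] perms_of_length[of s n] unfolding perms_of_def by auto

lemma perms_ofI:
  assumes "distinct s" "length s = n" "\<forall>x\<in>set s. 1 \<le> x \<and> x \<le> n"
  shows "s \<in> perms_of n"
proof -
  have "set s \<subseteq> {1..n}" using assms by auto
  moreover have "card (set s) = card {1..n}" using distinct_card[OF assms(1)] assms(2) by simp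
  ultimately show ?thesis using assms unfolding perms_of_def by (simp add: card_subset_eq)
qed

lemma perms_of_0: "perms_of 0 = {[]}"
  unfolding perms_of_def by auto

lemma finite_perms_of: "finite (perms_of n)"
proof -
  have "perms_of n \<subseteq> {xs. set xs \<subseteq> {1..n} \<and> length xs = n}"
    using perms_of_length unfolding perms_of_def by auto
  then show ?thesis using finite_lists_length_eq[of "{1..n}" n] finite_subset by blast
qed

lemma card_perms_of_greater:
  assumes s: "s \<in> perms_of n" and "v \<le> n"
  shows "card {q. q < n \<and> v < s!q} = n - v"
proof -
  have "bij_betw ((!) s) {q. q < n \<and> v < s!q} {v<..n}"
  proof (rule bij_betw_imageI)
    show "inj_on ((!) s) {q. q < n \<and> v < s!q}"
      using perms_of_distinct[OF s] perms_of_length[OF s] by (auto simp: inj_on_def nth_eq_iff_index_eq)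
    show "(!) s ` {q. q < n \<and> v < s!q} = {v<..n}"
    proof
      show "(!) s ` {q. q < n \<and> v < s!q} \<subseteq> {v<..n}" using perms_of_nth_bounds[OF s] by auto
      show "{v<..n} \<subseteq> (!) s ` {q. q < n \<and> v < s!q}"
      proof
        fix x assume x: "x \<in> {v<..n}"
        then have "x \<in> set s" using s unfolding perms_of_def by auto
        then obtain q where "q < n" "s!q = x" using perms_of_length[OF s] by (auto simp: in_set_conv_nth)
        then show "x \<in> (!) s ` {q. q < n \<and> v < s!q}" using x by auto
      qed
    qed
  qed
  then show ?thesis by (simp add: bij_betw_same_card)
qed

section \<open>Avoiding 123 and the pattern (k-1)...21(k+1)k\<close>

definition free123 :: "nat list \<Rightarrow> bool" where
  "free123 s \<longleftrightarrow> (\<forall>i j l. i < j \<longrightarrow> j < l \<longrightarrow> l < length s \<longrightarrow> \<not> (s!i < s!j \<and> s!j < s!l))"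

lemma avoids_123_iff_free123: "avoids s [1,2,3] \<longleftrightarrow> free123 s"
proof -
  have "contains_pattern s [1,2,3] \<longleftrightarrow>
        (\<exists>i j l. i < j \<and> j < l \<and> l < length s \<and> s!i < s!j \<and> s!j < s!l)"
  proof
    assume "contains_pattern s [1,2,3]"
    then obtain idx where idx: "length idx = length [1,2,3::nat]" "sorted_wrt (<) idx"
        "\<forall>i\<in>set idx. i < length s"
      and ord: "\<forall>a b. a < length [1,2,3::nat] \<longrightarrow> b < length [1,2,3::nat] \<longrightarrow>
                  s ! (idx ! a) < s ! (idx ! b) \<longleftrightarrow> [1,2,3::nat] ! a < [1,2,3::nat] ! b"
      unfolding contains_pattern_def by blast
    then obtain i j l where "idx = [i,j,l]" by (auto simp: numeral_3_eq_3 length_Suc_conv)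
    then show "\<exists>i j l. i < j \<and> j < l \<and> l < length s \<and> s!i < s!j \<and> s!j < s!l"
      using idx ord[rule_format, of 0 1] ord[rule_format, of 1 2] by auto
  next
    assume "\<exists>i j l. i < j \<and> j < l \<and> l < length s \<and> s!i < s!j \<and> s!j < s!l"
    then obtain i j l where "i < j" "j < l" "l < length s" "s!i < s!j" "s!j < s!l" by blast
    then show "contains_pattern s [1,2,3]"
      unfolding contains_pattern_def
      by (intro exI[of _ "[i,j,l]"]) (auto simp: numeral_3_eq_3 less_Suc_eq)
  qed
  then show ?thesis unfolding avoids_def free123_def by blast
qed

definition lower_left :: "nat list \<Rightarrow> nat \<Rightarrow> nat \<Rightarrow> nat" where
  "lower_left s a b = card {p. p < a \<and> s!p < s!b}"

definition inv_bounded :: "nat \<Rightarrow> nat list \<Rightarrow> bool" where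
  "inv_bounded h s \<longleftrightarrow>
     (\<forall>a b. a < b \<longrightarrow> b < length s \<longrightarrow> s!b < s!a \<longrightarrow> lower_left s a b \<le> h)"

lemma free123_lower_entries_decrease:
  assumes "distinct s" "free123 s" "p < q" "q < a" "a < length s" "s!q < s!a"
  shows "s!q < s!p"
proof -
  have "\<not> s!p < s!q" using assms unfolding free123_def by blast
  moreover have "s!p \<noteq> s!q" using assms by (simp add: nth_eq_iff_index_eq)
  ultimately show ?thesis by simp
qed

lemma descent_then_21_less_iff:
  fixes f :: "nat \<Rightarrow> 'a::linorder"
  assumes dec: "\<And>i j. i < j \<Longrightarrow> j < n \<Longrightarrow> f j < f i"
    and below: "\<And>i. i < n \<Longrightarrow> f i < f (Suc n)" and top: "f (Suc n) < f n"
    and x: "x \<le> Suc n" and y: "y \<le> Suc n"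
  shows "f x < f y \<longleftrightarrow> x < n \<and> (n \<le> y \<or> y < x) \<or> x = Suc n \<and> y = n"
proof -
  have below_n: "f i < f n" if "i \<le> Suc n" "i \<noteq> n" for i
    using that below[of i] top by (cases "i = Suc n") (auto simp: le_Suc_eq)
  consider "x < n" "y < n" | "x < n" "n \<le> y" | "x = n" | "x = Suc n"
    using x by (cases "x < n"; cases "y < n") (auto simp: le_Suc_eq not_less)
  then show ?thesis
  proof cases
    case 1
    then show ?thesis using dec[of x y] dec[of y x] by (cases x y rule: linorder_cases) auto
  next
    case 2
    then have "f x < f y" using y below[of x] below_n[of x] by (cases "y = n") (auto simp: le_Suc_eq)
    then show ?thesis using 2 by simp
  next
    case 3
    then show ?thesis using below_n[OF y] by (cases "y = n") auto
  next
    case 4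
    then show ?thesis using below[of y] y by (cases "y = n") (auto simp: le_Suc_eq top)
  qed
qed

lemma tau_shape:
  assumes "n \<ge> 1"
  shows "length (tau (Suc n)) = Suc (Suc n)"
    and "\<And>i j. i < j \<Longrightarrow> j < n \<Longrightarrow> tau (Suc n) ! j < tau (Suc n) ! i"
    and "\<And>i. i < n \<Longrightarrow> tau (Suc n) ! i < tau (Suc n) ! Suc n"
    and "tau (Suc n) ! Suc n < tau (Suc n) ! n"
  using assms by (auto simp: tau_def nth_append rev_nth simp del: upt_Suc)

lemma contains_tau_imp_lower_left:
  assumes "contains_pattern s (tau (Suc n))" "n \<ge> 1"
  obtains a b where "a < b" "b < length s" "s!b < s!a" "n \<le> lower_left s a b"
proof -
  obtain idx where len: "length idx = Suc (Suc n)" and sorted: "sorted_wrt (<) idx"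
    and bound: "\<forall>i\<in>set idx. i < length s"
    and ord: "\<And>x y. x < Suc (Suc n) \<Longrightarrow> y < Suc (Suc n) \<Longrightarrow>
                s ! (idx ! x) < s ! (idx ! y) \<longleftrightarrow> tau (Suc n) ! x < tau (Suc n) ! y"
    using assms tau_shape(1)[OF assms(2)] unfolding contains_pattern_def by metis
  let ?a = "idx ! n" and ?b = "idx ! Suc n"
  have "(!) idx ` {..<n} \<subseteq> {p. p < ?a \<and> s!p < s!?b}"
    using sorted len ord tau_shape(3)[OF assms(2)] by (auto simp: sorted_wrt_nth_less)
  moreover have "inj_on ((!) idx) {..<n}"
    using sorted len by (auto simp: inj_on_def strict_sorted_iff nth_eq_iff_index_eq)
  ultimately have "n \<le> lower_left s ?a ?b"
    unfolding lower_left_def using card_inj_on_le[of "(!) idx" "{..<n}"] by fastforce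
  moreover have "?a < ?b" using sorted len by (simp add: sorted_wrt_nth_less)
  moreover have "?b < length s" using bound len by simp
  moreover have "s!?b < s!?a" using ord[of "Suc n" n] tau_shape(4)[OF assms(2)] by simp
  ultimately show thesis using that by blast
qed

lemma lower_left_imp_contains_tau:
  assumes "distinct s" "free123 s" "n \<ge> 1" and ab: "a < b" "b < length s" "s!b < s!a"
    and low: "n \<le> lower_left s a b"
  shows "contains_pattern s (tau (Suc n))"
proof -
  obtain Q where Q: "Q \<subseteq> {p. p < a \<and> s!p < s!b}" "card Q = n"
    using obtain_subset_with_card_n low unfolding lower_left_def by metis
  then have "finite Q" using finite_subset[of Q "{..<a}"] by auto
  define qs where "qs = sorted_list_of_set Q"
  have qs: "length qs = n" "sorted_wrt (<) qs" "set qs = Q"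
    unfolding qs_def using Q \<open>finite Q\<close> by auto
  have qs_low: "qs ! i < a" "s!(qs!i) < s!b" if "i < n" for i
    using Q qs that nth_mem[of i qs] by auto
  then have qs_b: "qs ! i < b" "qs ! i < length s" if "i < n" for i
    using that ab(1,2) by (meson less_trans)+
  define idx where "idx = qs @ [a, b]"
  have idx: "idx ! i = qs ! i" if "i < n" for i using that qs unfolding idx_def by (simp add: nth_append)
  have idx_n: "idx ! n = a" "idx ! Suc n = b" using qs unfolding idx_def by (auto simp: nth_append)
  let ?f = "\<lambda>x. s ! (idx ! x)"
  have dec: "?f j < ?f i" if "i < j" "j < n" for i j
    using free123_lower_entries_decrease[OF assms(1,2), of "qs!i" "qs!j" a] that ab qs qs_low
      idx less_trans[OF qs_low(2) ab(3)] by (simp add: sorted_wrt_nth_less)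
  have ord: "?f x < ?f y \<longleftrightarrow> tau (Suc n) ! x < tau (Suc n) ! y"
    if "x < Suc (Suc n)" "y < Suc (Suc n)" for x y
    using descent_then_21_less_iff[of n ?f x y, OF dec] descent_then_21_less_iff[of n "(!) (tau (Suc n))" x y]
      tau_shape[OF assms(3)] that qs_low idx idx_n ab(3) by simp
  show ?thesis unfolding contains_pattern_def
  proof (intro exI conjI allI impI)
    show "length idx = length (tau (Suc n))" using qs tau_shape(1)[OF assms(3)] by (simp add: idx_def)
    show "sorted_wrt (<) idx" using qs qs_low qs_b ab unfolding idx_def
      by (auto simp: sorted_wrt_append in_set_conv_nth)
    show "\<forall>i\<in>set idx. i < length s" using qs qs_b ab unfolding idx_def
      by (auto simp: in_set_conv_nth)
  qed (use ord tau_shape(1)[OF assms(3)] in simp)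
qed

lemma avoids_tau_iff_inv_bounded:
  assumes "distinct s" "free123 s"
  shows "avoids s (tau (Suc (Suc h))) \<longleftrightarrow> inv_bounded h s"
proof -
  have "\<not> Suc h \<le> c \<longleftrightarrow> c \<le> h" for c by auto
  then show ?thesis unfolding avoids_def inv_bounded_def
    using contains_tau_imp_lower_left[of s "Suc h"] lower_left_imp_contains_tau[OF assms, of "Suc h"]
    by (metis le_add1 plus_1_eq_Suc)
qed

definition bounded_perms :: "nat \<Rightarrow> nat \<Rightarrow> nat list set" where
  "bounded_perms h n = {s \<in> perms_of n. free123 s \<and> inv_bounded h s}"

lemma finite_bounded_perms: "finite (bounded_perms h n)"
  unfolding bounded_perms_def using finite_perms_of by simp

lemma Sn_eq_bounded_perms: "Sn (Suc (Suc h)) n = bounded_perms h n"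
  using avoids_123_iff_free123 avoids_tau_iff_inv_bounded perms_of_distinct
  unfolding Sn_def bounded_perms_def by auto

section \<open>Skew sums\<close>

definition skew_sum :: "nat list \<Rightarrow> nat list \<Rightarrow> nat list" where
  "skew_sum a b = map (\<lambda>x. x + length b) a @ b"

lemma length_skew_sum: "length (skew_sum a b) = length a + length b"
  unfolding skew_sum_def by simp

lemma skew_sum_perms_of:
  assumes a: "a \<in> perms_of m" and b: "b \<in> perms_of n"
  shows "skew_sum a b \<in> perms_of (m + n)"
proof (rule perms_ofI)
  have lb: "length b = n" using b perms_of_length by auto
  show "length (skew_sum a b) = m + n"
    using perms_of_length[OF a] lb length_skew_sum by simp
  have "distinct (map (\<lambda>x. x + length b) a)"
    using perms_of_distinct[OF a] by (simp add: distinct_map inj_on_def)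
  moreover have "set (map (\<lambda>x. x + length b) a) \<inter> set b = {}"
    using a b lb unfolding perms_of_def by auto
  ultimately show "distinct (skew_sum a b)"
    unfolding skew_sum_def using perms_of_distinct[OF b] by simp
  show "\<forall>x\<in>set (skew_sum a b). 1 \<le> x \<and> x \<le> m + n"
    using a b lb unfolding perms_of_def skew_sum_def by auto
qed

lemma
  assumes a: "a \<in> perms_of m" and b: "b \<in> perms_of n"
  shows skew_sum_nth_upper: "i < m \<Longrightarrow> skew_sum a b ! i = a!i + n \<and> n < skew_sum a b ! i"
    and skew_sum_nth_lower:
      "m \<le> i \<Longrightarrow> i < m + n \<Longrightarrow> skew_sum a b ! i = b!(i - m) \<and> skew_sum a b ! i \<le> n"
  using perms_of_length[OF a] perms_of_length[OF b] perms_of_nth_bounds[OF a, of i]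
    perms_of_nth_bounds[OF b, of "i - m"]
  by (auto simp: skew_sum_def nth_append)

lemma free123_skew_sumD:
  assumes a: "a \<in> perms_of m" and b: "b \<in> perms_of n" and free: "free123 (skew_sum a b)"
  shows "free123 a" "free123 b"
proof -
  let ?s = "skew_sum a b"
  note upper = skew_sum_nth_upper[OF a b] and lower = skew_sum_nth_lower[OF a b]
  have la: "length a = m" and lb: "length b = n" and ls: "length ?s = m + n"
    using a b perms_of_length length_skew_sum by auto
  show "free123 a" unfolding free123_def
  proof (intro allI impI notI)
    fix i j l assume h: "i < j" "j < l" "l < length a" "a!i < a!j \<and> a!j < a!l"
    then have "?s!i < ?s!j \<and> ?s!j < ?s!l" using upper[of i] upper[of j] upper[of l] la by simp
    moreover have "l < length ?s" using h la ls by simp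
    ultimately show False using free h unfolding free123_def by blast
  qed
  show "free123 b" unfolding free123_def
  proof (intro allI impI notI)
    fix i j l assume h: "i < j" "j < l" "l < length b" "b!i < b!j \<and> b!j < b!l"
    then have "?s!(i+m) < ?s!(j+m) \<and> ?s!(j+m) < ?s!(l+m)"
      using lower[of "i+m"] lower[of "j+m"] lower[of "l+m"] lb by simp
    moreover have "i + m < j + m" "j + m < l + m" "l + m < length ?s" using h lb ls by auto
    ultimately show False using free unfolding free123_def by blast
  qed
qed

lemma free123_skew_sumI:
  assumes a: "a \<in> perms_of m" and b: "b \<in> perms_of n" and fa: "free123 a" and fb: "free123 b"
  shows "free123 (skew_sum a b)"
  unfolding free123_def
proof (intro allI impI notI)
  let ?s = "skew_sum a b"
  note upper = skew_sum_nth_upper[OF a b] and lower = skew_sum_nth_lower[OF a b]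
  have la: "length a = m" and lb: "length b = n" and ls: "length ?s = m + n"
    using a b perms_of_length length_skew_sum by auto
  fix i j l assume h: "i < j" "j < l" "l < length ?s" "?s!i < ?s!j \<and> ?s!j < ?s!l"
  consider "l < m" | "m \<le> i" | "i < m" "m \<le> l" by linarith
  then show False
  proof cases
    case 1
    then have "a!i < a!j \<and> a!j < a!l" using h upper[of i] upper[of j] upper[of l] by simp
    then show False using fa h 1 la unfolding free123_def by blast
  next
    case 2
    then have "b!(i-m) < b!(j-m) \<and> b!(j-m) < b!(l-m)"
      using h ls lower[of i] lower[of j] lower[of l] by simp
    moreover have "i - m < j - m" "j - m < l - m" "l - m < length b" using h 2 lb ls by auto
    ultimately show False using fb unfolding free123_def by blast
  next
    case 3
    then have "n < ?s!i" "?s!l \<le> n" using h ls upper[of i] lower[of l] by auto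
    then show False using h by linarith
  qed
qed

lemma lower_left_skew_sum_upper:
  assumes a: "a \<in> perms_of m" and b: "b \<in> perms_of n" and "x < m" "y < m"
  shows "lower_left (skew_sum a b) x y = lower_left a x y"
proof -
  have "{p. p < x \<and> skew_sum a b ! p < skew_sum a b ! y} = {p. p < x \<and> a ! p < a ! y}"
    using skew_sum_nth_upper[OF a b] assms(3,4) by auto
  then show ?thesis unfolding lower_left_def by simp
qed

lemma lower_left_skew_sum_lower:
  assumes a: "a \<in> perms_of m" and b: "b \<in> perms_of n" and "x < n" "y < n"
  shows "lower_left (skew_sum a b) (x + m) (y + m) = lower_left b x y"
proof -
  note upper = skew_sum_nth_upper[OF a b] and lower = skew_sum_nth_lower[OF a b]
  let ?s = "skew_sum a b"
  have "{p. p < x + m \<and> ?s ! p < ?s ! (y + m)} = (\<lambda>q. q + m) ` {p. p < x \<and> b ! p < b ! y}"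
  proof (rule set_eqI, rule iffI)
    fix p assume p: "p \<in> {p. p < x + m \<and> ?s ! p < ?s ! (y + m)}"
    have "\<not> p < m"
    proof
      assume "p < m"
      then have "n < ?s ! p" using upper[of p] by blast
      then show False using p lower[of "y + m"] assms(4) by simp
    qed
    then show "p \<in> (\<lambda>q. q + m) ` {p. p < x \<and> b ! p < b ! y}"
      using p lower[of p] lower[of "y + m"] assms(3,4) by (auto intro!: image_eqI[of _ _ "p - m"])
  next
    fix p assume "p \<in> (\<lambda>q. q + m) ` {p. p < x \<and> b ! p < b ! y}"
    then show "p \<in> {p. p < x + m \<and> ?s ! p < ?s ! (y + m)}"
      using lower[of p] lower[of "y + m"] assms(3,4) by auto
  qed
  then show ?thesis unfolding lower_left_def by (simp add: card_image)
qed

lemma lower_left_skew_sum_across: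
  assumes a: "a \<in> perms_of m" and b: "b \<in> perms_of n" and "x < m" "m \<le> y" "y < m + n"
  shows "lower_left (skew_sum a b) x y = 0"
proof -
  have "skew_sum a b ! y < skew_sum a b ! p" if "p < x" for p
    using skew_sum_nth_upper[OF a b, of p] skew_sum_nth_lower[OF a b, of y] that assms(3-5) by simp
  then show ?thesis unfolding lower_left_def by (auto simp: not_less_iff_gr_or_eq)
qed

lemma inv_bounded_skew_sumD:
  assumes a: "a \<in> perms_of m" and b: "b \<in> perms_of n" and bd: "inv_bounded h (skew_sum a b)"
  shows "inv_bounded h a" "inv_bounded h b"
proof -
  let ?s = "skew_sum a b"
  note upper = skew_sum_nth_upper[OF a b] and lower = skew_sum_nth_lower[OF a b]
  have la: "length a = m" and lb: "length b = n" and ls: "length ?s = m + n"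
    using a b perms_of_length length_skew_sum by auto
  show "inv_bounded h a" unfolding inv_bounded_def
  proof (intro allI impI)
    fix x y assume h: "x < y" "y < length a" "a!y < a!x"
    have "?s ! y < ?s ! x" using h upper[of x] upper[of y] la by simp
    then have "lower_left ?s x y \<le> h" using bd h la ls unfolding inv_bounded_def by simp
    then show "lower_left a x y \<le> h" using lower_left_skew_sum_upper[OF a b, of x y] h la by simp
  qed
  show "inv_bounded h b" unfolding inv_bounded_def
  proof (intro allI impI)
    fix x y assume h: "x < y" "y < length b" "b!y < b!x"
    have "?s ! (y+m) < ?s ! (x+m)" using h lower[of "x+m"] lower[of "y+m"] lb by simp
    then have "lower_left ?s (x+m) (y+m) \<le> h" using bd h lb ls unfolding inv_bounded_def by simp
    then show "lower_left b x y \<le> h" using lower_left_skew_sum_lower[OF a b, of x y] h lb by simp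
  qed
qed

lemma inv_bounded_skew_sumI:
  assumes a: "a \<in> perms_of m" and b: "b \<in> perms_of n"
    and ba: "inv_bounded h a" and bb: "inv_bounded h b"
  shows "inv_bounded h (skew_sum a b)"
  unfolding inv_bounded_def
proof (intro allI impI)
  let ?s = "skew_sum a b"
  note upper = skew_sum_nth_upper[OF a b] and lower = skew_sum_nth_lower[OF a b]
  have la: "length a = m" and lb: "length b = n" and ls: "length ?s = m + n"
    using a b perms_of_length length_skew_sum by auto
  fix x y assume h: "x < y" "y < length ?s" "?s ! y < ?s ! x"
  consider "y < m" | "m \<le> x" | "x < m" "m \<le> y" by linarith
  then show "lower_left ?s x y \<le> h"
  proof cases
    case 1
    then have "a!y < a!x" using h upper[of x] upper[of y] by simp
    then show ?thesis
      using ba h 1 la lower_left_skew_sum_upper[OF a b, of x y] unfolding inv_bounded_def by simp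
  next
    case 2
    have "b!(y-m) < b!(x-m)" using h ls 2 lower[of x] lower[of y] by simp
    moreover have "x - m < y - m" "y - m < length b" using h 2 lb ls by auto
    ultimately have "lower_left b (x-m) (y-m) \<le> h" using bb unfolding inv_bounded_def by blast
    moreover have "lower_left ?s ((x-m)+m) ((y-m)+m) = lower_left b (x-m) (y-m)"
      by (rule lower_left_skew_sum_lower[OF a b]) (use h 2 lb ls in auto)
    ultimately show ?thesis using 2 h by simp
  next
    case 3
    then show ?thesis using lower_left_skew_sum_across[OF a b, of x y] h ls by simp
  qed
qed

text \<open>For a permutation this says that no proper prefix consists of the largest values.\<close>
definition skew_indecomposable :: "nat list \<Rightarrow> bool" where
  "skew_indecomposable s \<longleftrightarrow> (\<forall>j. 0 < j \<longrightarrow> j < length s \<longrightarrow> (\<exists>p<j. s!p \<le> length s - j))"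
lemma skew_sum_indec_first_length_le:
  assumes a: "a \<in> perms_of m" and b: "b \<in> perms_of (n - m)" and m: "1 \<le> m" "m \<le> n"
    and a': "a' \<in> perms_of m'" "skew_indecomposable a'" and b': "b' \<in> perms_of (n - m')"
    and "m' \<le> n" and eq: "skew_sum a b = skew_sum a' b'"
  shows "m' \<le> m"
proof (rule ccontr)
  assume "\<not> m' \<le> m"
  moreover have "length a' = m'" using a'(1) perms_of_length by simp
  ultimately obtain p where p: "p < m" "a'!p \<le> m' - m"
    using a'(2) m(1) unfolding skew_indecomposable_def by (metis not_le zero_less_one less_le_trans)
  have "skew_sum a b ! p = a'!p + (n - m')"
    using eq skew_sum_nth_upper[OF a'(1) b'] p \<open>\<not> m' \<le> m\<close> by simp
  also have "\<dots> \<le> n - m" using p \<open>m' \<le> n\<close> \<open>\<not> m' \<le> m\<close> by simp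
  finally have "skew_sum a b ! p \<le> n - m" .
  moreover have "n - m < skew_sum a b ! p" using skew_sum_nth_upper[OF a b, of p] p by blast
  ultimately show False by simp
qed

lemma skew_sum_indec_inj:
  assumes a: "a \<in> perms_of m" "skew_indecomposable a" and b: "b \<in> perms_of (n - m)"
    and m: "1 \<le> m" "m \<le> n"
    and a': "a' \<in> perms_of m'" "skew_indecomposable a'" and b': "b' \<in> perms_of (n - m')"
    and m': "1 \<le> m'" "m' \<le> n"
    and eq: "skew_sum a b = skew_sum a' b'"
  shows "m = m' \<and> a = a' \<and> b = b'"
proof -
  have mm: "m = m'"
    using skew_sum_indec_first_length_le[OF a(1) b m a' b' m'(2) eq]
      skew_sum_indec_first_length_le[OF a'(1) b' m' a b m(2) eq[symmetric]] by simp
  have la: "length a = m" and la': "length a' = m" and lb: "length b = n - m"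
    and lb': "length b' = n - m"
    using a a' b b' mm perms_of_length by auto
  have "map (\<lambda>x. x + (n - m)) a = map (\<lambda>x. x + (n - m)) a'"
    using arg_cong[OF eq, of "take m"] la lb la' lb' unfolding skew_sum_def by simp
  then have "a = a'" by (simp add: inj_map_eq_map inj_on_def)
  moreover have "b = b'" using arg_cong[OF eq, of "drop m"] la la' unfolding skew_sum_def by simp
  ultimately show ?thesis using mm by blast
qed

lemma perms_of_split_top_prefix:
  assumes s: "s \<in> perms_of n" and "m \<le> n" and top: "\<And>p. p < m \<Longrightarrow> n - m < s!p"
  defines "a \<equiv> map (\<lambda>x. x - (n - m)) (take m s)"
  shows "a \<in> perms_of m" "drop m s \<in> perms_of (n - m)" "s = skew_sum a (drop m s)"
proof -
  have ls: "length s = n" and ds: "distinct s" using s perms_of_length perms_of_distinct by auto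
  define T where "T = set (take m s)"
  have "T \<subseteq> {n-m+1..n}"
    using top perms_of_nth_bounds[OF s] \<open>m \<le> n\<close> ls by (auto simp: T_def in_set_conv_nth Suc_le_eq)
  moreover have "card T = m" unfolding T_def using ds \<open>m \<le> n\<close> ls by (simp add: distinct_card)
  ultimately have T: "T = {n-m+1..n}" using \<open>m \<le> n\<close> by (simp add: card_subset_eq)
  show "a \<in> perms_of m"
  proof (rule perms_ofI)
    have "inj_on (\<lambda>x. x - (n - m)) T" using T by (auto simp: inj_on_def)
    then show "distinct a" unfolding a_def using ds T_def by (simp add: distinct_map)
    show "length a = m" unfolding a_def using \<open>m \<le> n\<close> ls by simp
    show "\<forall>x\<in>set a. 1 \<le> x \<and> x \<le> m" unfolding a_def using T T_def \<open>m \<le> n\<close> by auto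
  qed
  show "drop m s \<in> perms_of (n - m)"
  proof (rule perms_ofI)
    show "distinct (drop m s)" using ds by simp
    show "length (drop m s) = n - m" using ls by simp
    have "T \<inter> set (drop m s) = {}"
      using ds distinct_append[of "take m s" "drop m s"] unfolding T_def by simp
    moreover have "set (drop m s) \<subseteq> {1..n}" using s set_drop_subset[of m s] unfolding perms_of_def by simp
    ultimately have "x \<in> {1..n} - {n-m+1..n}" if "x \<in> set (drop m s)" for x
      using that T by blast
    then show "\<forall>x\<in>set (drop m s). 1 \<le> x \<and> x \<le> n - m" by fastforce
  qed
  have "map (\<lambda>x. x + (n - m)) a = take m s"
    unfolding a_def map_map by (rule map_idI) (use T T_def in auto)
  then show "s = skew_sum a (drop m s)" unfolding skew_sum_def using ls by simp
qed

lemma skew_decomposition_exists: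
  assumes s: "s \<in> perms_of n" and "1 \<le> n"
  obtains m a b where "1 \<le> m" "m \<le> n" "a \<in> perms_of m" "skew_indecomposable a"
    "b \<in> perms_of (n - m)" "s = skew_sum a b"
proof -
  define P where "P j \<longleftrightarrow> 1 \<le> j \<and> (\<forall>p<j. n - j < s!p)" for j
  have "P n" unfolding P_def using \<open>1 \<le> n\<close> perms_of_nth_bounds[OF s] by fastforce
  define m where "m = (LEAST j. P j)"
  have Pm: "P m" unfolding m_def using \<open>P n\<close> by (rule LeastI)
  have mn: "m \<le> n" unfolding m_def using \<open>P n\<close> by (rule Least_le)
  have top: "\<And>p. p < m \<Longrightarrow> n - m < s!p" using Pm unfolding P_def by simp
  define a where "a = map (\<lambda>x. x - (n - m)) (take m s)"
  note split = perms_of_split_top_prefix[OF s mn top, folded a_def]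
  have la: "length a = m" and ls: "length s = n"
    using split(1) s perms_of_length by auto
  have "skew_indecomposable a" unfolding skew_indecomposable_def la
  proof (intro allI impI)
    fix j assume j: "0 < j" "j < m"
    have "\<not> P j" using j(2) unfolding m_def by (rule not_less_Least)
    then obtain p where p: "p < j" "s!p \<le> n - j" using j unfolding P_def by auto
    have "a!p = s!p - (n - m)" unfolding a_def using p j mn ls by simp
    then show "\<exists>p<j. a!p \<le> m - j" using p j mn by (intro exI[of _ p]) linarith
  qed
  then show thesis using that[OF _ mn split(1) _ split(2,3)] Pm unfolding P_def by blast
qed

definition indec_perms :: "nat \<Rightarrow> nat \<Rightarrow> nat list set" where
  "indec_perms h n = {s \<in> bounded_perms h n. skew_indecomposable s}"

lemma skew_sum_bounded_perms_iff:
  assumes "a \<in> perms_of m" "b \<in> perms_of n"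
  shows "skew_sum a b \<in> bounded_perms h (m + n) \<longleftrightarrow> a \<in> bounded_perms h m \<and> b \<in> bounded_perms h n"
proof
  assume "skew_sum a b \<in> bounded_perms h (m + n)"
  then have "free123 (skew_sum a b)" "inv_bounded h (skew_sum a b)" unfolding bounded_perms_def by auto
  then show "a \<in> bounded_perms h m \<and> b \<in> bounded_perms h n"
    using assms free123_skew_sumD[OF assms] inv_bounded_skew_sumD[OF assms] unfolding bounded_perms_def
    by auto
next
  assume "a \<in> bounded_perms h m \<and> b \<in> bounded_perms h n"
  then show "skew_sum a b \<in> bounded_perms h (m + n)"
    using skew_sum_perms_of[OF assms] free123_skew_sumI[OF assms] inv_bounded_skew_sumI[OF assms]
    unfolding bounded_perms_def by auto
qed

lemma card_bounded_perms_skew: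
  assumes "1 \<le> n"
  shows "card (bounded_perms h n) =
    (\<Sum>m=1..n. card (indec_perms h m) * card (bounded_perms h (n - m)))"
proof -
  define S where "S = (SIGMA m:{1..n}. indec_perms h m \<times> bounded_perms h (n - m))"
  have "bij_betw (\<lambda>(m, a, b). skew_sum a b) S (bounded_perms h n)"
  proof (rule bij_betwI')
    fix x y assume "x \<in> S" "y \<in> S"
    then obtain m a b m' a' b' where xy: "x = (m, a, b)" "y = (m', a', b')"
      and "1 \<le> m" "m \<le> n" "a \<in> perms_of m" "skew_indecomposable a" "b \<in> perms_of (n - m)"
      and "1 \<le> m'" "m' \<le> n" "a' \<in> perms_of m'" "skew_indecomposable a'" "b' \<in> perms_of (n - m')"
      unfolding S_def indec_perms_def bounded_perms_def by auto
    then show "((\<lambda>(m, a, b). skew_sum a b) x = (\<lambda>(m, a, b). skew_sum a b) y) = (x = y)"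
      using skew_sum_indec_inj[of a m b n a' m' b'] by auto
  next
    fix x assume "x \<in> S"
    then obtain m a b where "x = (m, a, b)" "m \<le> n" "a \<in> bounded_perms h m" "b \<in> bounded_perms h (n - m)"
      unfolding S_def indec_perms_def by auto
    then show "(\<lambda>(m, a, b). skew_sum a b) x \<in> bounded_perms h n"
      using skew_sum_bounded_perms_iff[of a m b "n - m" h] unfolding bounded_perms_def by auto
  next
    fix s assume s: "s \<in> bounded_perms h n"
    then obtain m a b where m: "1 \<le> m" "m \<le> n" and a: "a \<in> perms_of m" "skew_indecomposable a"
      and b: "b \<in> perms_of (n - m)" and "s = skew_sum a b"
      using skew_decomposition_exists[OF _ assms] unfolding bounded_perms_def by blast
    moreover have "a \<in> bounded_perms h m \<and> b \<in> bounded_perms h (n - m)"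
      using skew_sum_bounded_perms_iff[OF a(1) b, of h] s m \<open>s = skew_sum a b\<close> by simp
    ultimately show "\<exists>x\<in>S. s = (\<lambda>(m, a, b). skew_sum a b) x"
      unfolding S_def indec_perms_def by (intro bexI[of _ "(m, a, b)"]) auto
  qed
  then have "card (bounded_perms h n) = card S" by (simp add: bij_betw_same_card)
  also have "\<dots> = (\<Sum>m=1..n. card (indec_perms h m) * card (bounded_perms h (n - m)))"
    unfolding S_def indec_perms_def using finite_bounded_perms
    by (simp add: card_SigmaI card_cartesian_product)
  finally show ?thesis .
qed

section \<open>Shifting the left-to-right minima\<close>

definition prefix_min :: "nat list \<Rightarrow> nat \<Rightarrow> nat" where
  "prefix_min s i = Min (set (take (Suc i) s))"

lemma prefix_min_le: "p \<le> i \<Longrightarrow> i < length s \<Longrightarrow> prefix_min s i \<le> s!p"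
  unfolding prefix_min_def by (rule Min_le) (auto simp: in_set_conv_nth intro!: exI[of _ p])

lemma prefix_min_attained:
  assumes "i < length s"
  obtains p where "p \<le> i" "s!p = prefix_min s i"
proof -
  have "set (take (Suc i) s) \<noteq> {}" using assms by (cases s) auto
  then have "prefix_min s i \<in> set (take (Suc i) s)" unfolding prefix_min_def by simp
  then obtain p where "p < Suc i" "s!p = prefix_min s i" using assms by (auto simp: in_set_conv_nth)
  then show thesis using that by (simp add: less_Suc_eq_le)
qed

lemma prefix_min_antimono:
  assumes "j \<le> i" "i < length s"
  shows "prefix_min s i \<le> prefix_min s j"
proof -
  obtain p where "p \<le> j" "s!p = prefix_min s j" using prefix_min_attained[of j s] assms by auto
  then show ?thesis using prefix_min_le[of p i s] assms by simp
qed

lemma prefix_min_Suc: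
  assumes "Suc i < length s"
  shows "prefix_min s (Suc i) = min (prefix_min s i) (s ! Suc i)"
proof -
  have "take (Suc (Suc i)) s = take (Suc i) s @ [s ! Suc i]"
    using assms by (simp add: take_Suc_conv_app_nth)
  moreover have "set (take (Suc i) s) \<noteq> {}" using assms by (cases s) auto
  ultimately show ?thesis unfolding prefix_min_def by (simp add: min.commute)
qed

lemma prefix_min_const:
  assumes "\<And>k. q \<le> k \<Longrightarrow> k < r \<Longrightarrow> prefix_min s k \<le> s ! Suc k" and "r < length s" "q \<le> r"
  shows "prefix_min s r = prefix_min s q"
  using assms
proof (induction r)
  case (Suc r)
  show ?case
  proof (cases "q = Suc r")
    case False
    then have "prefix_min s r = prefix_min s q" using Suc by simp
    moreover have "prefix_min s r \<le> s ! Suc r" using Suc.prems(1)[of r] False Suc.prems(3) by simp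
    ultimately show ?thesis using prefix_min_Suc[OF Suc.prems(2)] by simp
  qed simp
qed simp

lemma prefix_min_last:
  assumes "s \<in> perms_of m" "1 \<le> m"
  shows "prefix_min s (m - 1) = 1"
proof -
  have "take (Suc (m - 1)) s = s" using assms perms_of_length by simp
  then have "prefix_min s (m - 1) = Min {1..m}" using assms(1) unfolding prefix_min_def perms_of_def by simp
  also have "\<dots> = 1" using assms(2) by (intro Min_eqI) auto
  finally show ?thesis .
qed

definition shift_entry :: "nat list \<Rightarrow> nat \<Rightarrow> nat" where
  "shift_entry s i = max (s ! Suc i) (prefix_min s i)"

text \<open>Delete the first entry and move the value of every left-to-right minimum to the next
  left-to-right minimum. The value of the last one, which is 1, disappears, so all values are
  lowered by one.\<close>
definition lrmin_shift :: "nat list \<Rightarrow> nat list" where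
  "lrmin_shift s = map (\<lambda>i. shift_entry s i - 1) [0..<length s - 1]"

lemma length_lrmin_shift: "length (lrmin_shift s) = length s - 1"
  unfolding lrmin_shift_def by simp

lemma lrmin_shift_nth: "i < length s - 1 \<Longrightarrow> lrmin_shift s ! i = shift_entry s i - 1"
  unfolding lrmin_shift_def by simp

lemma shift_entry_ge_2:
  assumes s: "s \<in> perms_of m" and "Suc i < m"
  shows "2 \<le> shift_entry s i"
proof -
  have ls: "length s = m" using s perms_of_length by simp
  obtain p where p: "p \<le> i" "s!p = prefix_min s i" using prefix_min_attained[of i s] assms ls by auto
  have "s!p \<noteq> s!(Suc i)"
    using nth_eq_iff_index_eq[OF perms_of_distinct[OF s], of p "Suc i"] p assms ls by simp
  moreover have "1 \<le> s!p" "1 \<le> s!(Suc i)"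
    using perms_of_nth_bounds[OF s, of p] perms_of_nth_bounds[OF s, of "Suc i"] p assms by auto
  ultimately show ?thesis using p unfolding shift_entry_def by linarith
qed

lemma shift_entry_inj:
  assumes d: "distinct s" and ii: "i < i'" "Suc i' < length s"
  shows "shift_entry s i \<noteq> shift_entry s i'"
proof
  assume eq: "shift_entry s i = shift_entry s i'"
  obtain p where p: "p \<le> i" "s!p = prefix_min s i" using prefix_min_attained[of i s] ii by auto
  have inj: "\<And>x y. x < length s \<Longrightarrow> y < length s \<Longrightarrow> s!x = s!y \<Longrightarrow> x = y"
    using d by (simp add: nth_eq_iff_index_eq)
  have m1: "prefix_min s i' \<le> prefix_min s (Suc i)" using prefix_min_antimono[of "Suc i" i' s] ii by simp
  have m2: "prefix_min s (Suc i) \<le> s!(Suc i)" using prefix_min_le[of "Suc i" "Suc i" s] ii by simp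
  have m3: "prefix_min s i' \<le> prefix_min s i" using prefix_min_antimono[of i i' s] ii by simp
  consider "prefix_min s i \<le> s!(Suc i)" "prefix_min s i' \<le> s!(Suc i')"
    | "prefix_min s i \<le> s!(Suc i)" "s!(Suc i') < prefix_min s i'"
    | "s!(Suc i) < prefix_min s i" by linarith
  then show False
  proof cases
    case 1
    then have "s!(Suc i) = s!(Suc i')" using eq by (simp add: shift_entry_def)
    then show False using inj[of "Suc i" "Suc i'"] ii by simp
  next
    case 2
    then have "s!(Suc i) = prefix_min s i'" using eq by (simp add: shift_entry_def)
    then have "prefix_min s i = s!(Suc i)" using 2 m1 m2 m3 by linarith
    then show False using inj[of p "Suc i"] p ii by simp
  next
    case 3
    show False
    proof (cases "s!(Suc i') < prefix_min s i'")
      case True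
      then show False using 3 eq m1 m2 by (simp add: shift_entry_def)
    next
      case False
      then have "prefix_min s i = s!(Suc i')" using 3 eq by (simp add: shift_entry_def)
      then show False using inj[of p "Suc i'"] p ii by simp
    qed
  qed
qed

lemma lrmin_shift_less_iff:
  assumes "s \<in> perms_of m" "Suc x < m" "Suc y < m"
  shows "lrmin_shift s ! x < lrmin_shift s ! y \<longleftrightarrow> shift_entry s x < shift_entry s y"
  using assms shift_entry_ge_2[OF assms(1,2)] shift_entry_ge_2[OF assms(1,3)]
    lrmin_shift_nth[of x s] lrmin_shift_nth[of y s] perms_of_length[OF assms(1)] by auto

lemma lrmin_shift_perms_of:
  assumes s: "s \<in> perms_of m"
  shows "lrmin_shift s \<in> perms_of (m - 1)"
proof (rule perms_ofI)
  have ls: "length s = m" using s perms_of_length by simp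
  then show len: "length (lrmin_shift s) = m - 1" using length_lrmin_shift by simp
  show "distinct (lrmin_shift s)" unfolding distinct_conv_nth len
  proof (intro allI impI)
    fix i j assume ij: "i < m - 1" "j < m - 1" "i \<noteq> j"
    then have sij: "Suc i < m" "Suc j < m" by auto
    then have "shift_entry s i \<noteq> shift_entry s j"
      using shift_entry_inj[OF perms_of_distinct[OF s], of i j]
        shift_entry_inj[OF perms_of_distinct[OF s], of j i] ij(3) ls by (cases "i < j") auto
    then show "lrmin_shift s ! i \<noteq> lrmin_shift s ! j"
      using lrmin_shift_nth[of i s] lrmin_shift_nth[of j s] ij ls
        shift_entry_ge_2[OF s sij(1)] shift_entry_ge_2[OF s sij(2)] by auto
  qed
  show "\<forall>x\<in>set (lrmin_shift s). 1 \<le> x \<and> x \<le> m - 1"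
  proof
    fix x assume "x \<in> set (lrmin_shift s)"
    then obtain i where i: "i < m - 1" "x = shift_entry s i - 1"
      using len ls lrmin_shift_nth by (auto simp: in_set_conv_nth)
    have si: "Suc i < m" using i by simp
    then have "s!(Suc i) \<le> m" "prefix_min s i \<le> m"
      using perms_of_nth_bounds[OF s, of "Suc i"] perms_of_nth_bounds[OF s, of 0]
        prefix_min_le[of 0 i s] ls by auto
    then show "1 \<le> x \<and> x \<le> m - 1"
      using i shift_entry_ge_2[OF s si] unfolding shift_entry_def by auto
  qed
qed

lemma shift_entry_attained:
  assumes "Suc i < length s"
  obtains q where "q \<le> Suc i" "s!q = shift_entry s i"
proof (cases "prefix_min s i \<le> s!(Suc i)")
  case True
  then show thesis using that[of "Suc i"] by (simp add: shift_entry_def)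
next
  case False
  obtain p where "p \<le> i" "s!p = prefix_min s i" using prefix_min_attained[of i s] assms by auto
  then show thesis using that[of p] False by (simp add: shift_entry_def)
qed

lemma free123_lrmin_shift:
  assumes s: "s \<in> perms_of m" and free: "free123 s"
  shows "free123 (lrmin_shift s)"
  unfolding free123_def
proof (intro allI impI notI)
  fix i j l assume h: "i < j" "j < l" "l < length (lrmin_shift s)"
    "lrmin_shift s ! i < lrmin_shift s ! j \<and> lrmin_shift s ! j < lrmin_shift s ! l"
  have ls: "length s = m" using s perms_of_length by simp
  have lt: "Suc i < m" "Suc j < m" "Suc l < m" using h length_lrmin_shift ls by auto
  then have X: "shift_entry s i < shift_entry s j" "shift_entry s j < shift_entry s l"
    using h lrmin_shift_less_iff[OF s] by auto
  have "prefix_min s j \<le> prefix_min s i" "prefix_min s l \<le> prefix_min s i"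
    using prefix_min_antimono h lt ls by auto
  then have "shift_entry s j = s!(Suc j)" "shift_entry s l = s!(Suc l)"
    using X unfolding shift_entry_def by (simp_all add: max_def split: if_splits)
  moreover obtain q where "q \<le> Suc i" "s!q = shift_entry s i"
    using shift_entry_attained[of i s] lt ls by auto
  ultimately have "q < Suc j" "s!q < s!(Suc j)" "s!(Suc j) < s!(Suc l)"
    using X h by auto
  then show False using free h(2) lt(3) ls unfolding free123_def by (meson Suc_mono)
qed

lemma card_non_least:
  assumes "finite (P :: nat set)"
  shows "card {p \<in> P. \<exists>q\<in>P. q < p} = card P - 1"
proof (cases "P = {}")
  case False
  have "{p \<in> P. \<exists>q\<in>P. q < p} = P - {Min P}"
  proof (rule set_eqI, rule iffI)
    fix p assume "p \<in> {p \<in> P. \<exists>q\<in>P. q < p}"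
    then show "p \<in> P - {Min P}" using Min_le[OF assms] by fastforce
  next
    fix p assume p: "p \<in> P - {Min P}"
    then have "Min P < p" using Min_le[OF assms, of p] by auto
    then show "p \<in> {p \<in> P. \<exists>q\<in>P. q < p}" using p Min_in[OF assms False] by auto
  qed
  then show ?thesis using assms False by (simp add: Min_in)
qed simp

lemma card_shift_entry_less:
  assumes "Suc a < length s"
  shows "card {p. p < a \<and> shift_entry s p < v} = card {p. p < Suc a \<and> s!p < v} - 1"
proof -
  define P where "P = {p. p < Suc a \<and> s!p < v}"
  have "{p. p < a \<and> shift_entry s p < v} = (\<lambda>p. p - 1) ` {p \<in> P. \<exists>q\<in>P. q < p}"
  proof (rule set_eqI, rule iffI)
    fix p assume "p \<in> {p. p < a \<and> shift_entry s p < v}"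
    then have h: "p < a" "s!(Suc p) < v" "prefix_min s p < v" by (auto simp: shift_entry_def)
    obtain q where "q \<le> p" "s!q = prefix_min s p" using prefix_min_attained[of p s] h assms by auto
    then have "Suc p \<in> P" "q \<in> P" "q < Suc p" unfolding P_def using h by auto
    then have "Suc p \<in> {p \<in> P. \<exists>q\<in>P. q < p}" by blast
    then show "p \<in> (\<lambda>p. p - 1) ` {p \<in> P. \<exists>q\<in>P. q < p}" by (intro image_eqI[of _ _ "Suc p"]) auto
  next
    fix x assume "x \<in> (\<lambda>p. p - 1) ` {p \<in> P. \<exists>q\<in>P. q < p}"
    then obtain p q where x: "x = p - 1" "p < Suc a" "s!p < v" "q < p" "s!q < v"
      unfolding P_def by auto
    then have "prefix_min s x \<le> s!q" using prefix_min_le[of q x s] assms by simp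
    then show "x \<in> {p. p < a \<and> shift_entry s p < v}"
      using x by (cases p) (auto simp: shift_entry_def)
  qed
  moreover have "inj_on (\<lambda>p. p - 1) {p \<in> P. \<exists>q\<in>P. q < p}" by (auto simp: inj_on_def)
  ultimately have "card {p. p < a \<and> shift_entry s p < v} = card {p \<in> P. \<exists>q\<in>P. q < p}"
    by (simp add: card_image)
  also have "\<dots> = card P - 1" by (rule card_non_least) (simp add: P_def)
  finally show ?thesis unfolding P_def .
qed

lemma lower_left_lrmin_shift:
  assumes s: "s \<in> perms_of m" and "a < b" "Suc b < m" and "prefix_min s b < s!(Suc b)"
  shows "lower_left (lrmin_shift s) a b = lower_left s (Suc a) (Suc b) - 1"
proof -
  have "{p. p < a \<and> lrmin_shift s ! p < lrmin_shift s ! b} = {p. p < a \<and> shift_entry s p < s!(Suc b)}"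
    using lrmin_shift_less_iff[OF s] assms(2-4) by (auto simp: shift_entry_def)
  then show ?thesis
    unfolding lower_left_def using card_shift_entry_less[of a s] assms perms_of_length[OF s] by simp
qed

lemma inv_bounded_lrmin_shift:
  assumes s: "s \<in> perms_of m" and bd: "inv_bounded (Suc h) s"
  shows "inv_bounded h (lrmin_shift s)"
  unfolding inv_bounded_def
proof (intro allI impI)
  fix a b assume ab: "a < b" "b < length (lrmin_shift s)" "lrmin_shift s ! b < lrmin_shift s ! a"
  have ls: "length s = m" using s perms_of_length by simp
  have bm: "Suc b < m" using ab length_lrmin_shift ls by simp
  have X: "shift_entry s b < shift_entry s a" using lrmin_shift_less_iff[OF s, of b a] ab bm by simp
  show "lower_left (lrmin_shift s) a b \<le> h"
  proof (rule ccontr)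
    assume "\<not> lower_left (lrmin_shift s) a b \<le> h"
    then have "lower_left (lrmin_shift s) a b \<noteq> 0" by simp
    then obtain p where p: "p < a" "lrmin_shift s ! p < lrmin_shift s ! b"
      unfolding lower_left_def by (metis (no_types, lifting) card.empty empty_Collect_eq)
    then have "shift_entry s p < shift_entry s b" using lrmin_shift_less_iff[OF s, of p b] ab bm by simp
    moreover have "prefix_min s b \<le> prefix_min s p" "prefix_min s a \<le> prefix_min s p"
      using prefix_min_antimono[of p b s] prefix_min_antimono[of p a s] p ab bm ls by auto
    ultimately have "prefix_min s b < s!(Suc b)" "prefix_min s a < s!(Suc a)"
      using X unfolding shift_entry_def by (simp_all add: max_def split: if_splits)
    then have "s!(Suc b) < s!(Suc a)" "h < lower_left s (Suc a) (Suc b) - 1"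
      using X lower_left_lrmin_shift[OF s ab(1) bm] \<open>\<not> _ \<le> h\<close> by (auto simp: shift_entry_def)
    moreover have "Suc a < Suc b" "Suc b < length s" using ab bm ls by auto
    ultimately have "lower_left s (Suc a) (Suc b) \<le> Suc h" using bd unfolding inv_bounded_def by blast
    then show False using \<open>h < lower_left s (Suc a) (Suc b) - 1\<close> by linarith
  qed
qed

lemma inv_bounded_of_lrmin_shift:
  assumes s: "s \<in> perms_of m" and bd: "inv_bounded h (lrmin_shift s)"
  shows "inv_bounded (Suc h) s"
  unfolding inv_bounded_def
proof (intro allI impI)
  fix a b assume ab: "a < b" "b < length s" "s!b < s!a"
  have ls: "length s = m" using s perms_of_length by simp
  show "lower_left s a b \<le> Suc h"
  proof (rule ccontr)
    assume "\<not> lower_left s a b \<le> Suc h"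
    then have "lower_left s a b \<noteq> 0" by simp
    then obtain p where p: "p < a" "s!p < s!b"
      unfolding lower_left_def by (metis (no_types, lifting) card.empty empty_Collect_eq)
    obtain a' b' where a': "a = Suc a'" and b': "b = Suc b'" using p ab by (cases a; cases b) auto
    have "prefix_min s b' \<le> s!p" "prefix_min s a' \<le> s!p"
      using prefix_min_le p ab a' b' ls by auto
    then have "prefix_min s b' < s!b" "shift_entry s b' = s!b" "shift_entry s a' = s!a"
      using p ab a' b' unfolding shift_entry_def by auto
    moreover have "a' < b'" "Suc b' < m" using ab a' b' ls by auto
    ultimately have "lrmin_shift s ! b' < lrmin_shift s ! a'"
      "h < lower_left (lrmin_shift s) a' b'"
      using lrmin_shift_less_iff[OF s, of b' a'] lower_left_lrmin_shift[OF s, of a' b']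
        ab a' b' \<open>\<not> _ \<le> Suc h\<close> by auto
    moreover have "b' < length (lrmin_shift s)" using \<open>Suc b' < m\<close> length_lrmin_shift[of s] ls by simp
    ultimately have "lower_left (lrmin_shift s) a' b' \<le> h"
      using bd \<open>a' < b'\<close> unfolding inv_bounded_def by blast
    then show False using \<open>h < lower_left (lrmin_shift s) a' b'\<close> by linarith
  qed
qed

text \<open>If s is skew-indecomposable and avoids 123, the low left-to-right minima of lrmin_shift s
  are the positions i such that s!(Suc i) is a left-to-right minimum of s.\<close>
definition low_lrmin :: "nat list \<Rightarrow> nat \<Rightarrow> bool" where
  "low_lrmin t i \<longleftrightarrow> i < length t \<and> (\<forall>p<i. t!i < t!p) \<and> t!i + i < length t"

definition unshift_prefix_min :: "nat list \<Rightarrow> nat \<Rightarrow> nat" where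
  "unshift_prefix_min t q =
     (if \<exists>l. q \<le> l \<and> low_lrmin t l then t!(LEAST l. q \<le> l \<and> low_lrmin t l) + 1 else 1)"

text \<open>The inverse of lrmin_shift: the left-to-right minima of the result sit at 0 and right after
  the low left-to-right minima of t, and each takes back the value of the next low one.\<close>
definition lrmin_unshift :: "nat list \<Rightarrow> nat list" where
  "lrmin_unshift t = map (\<lambda>q. if q = 0 \<or> low_lrmin t (q - 1) then unshift_prefix_min t q else t!(q - 1) + 1)
     [0..<Suc (length t)]"

lemma length_lrmin_unshift: "length (lrmin_unshift t) = Suc (length t)"
  unfolding lrmin_unshift_def by simp

lemma lrmin_unshift_nth_min:
  "q \<le> length t \<Longrightarrow> q = 0 \<or> low_lrmin t (q - 1) \<Longrightarrow> lrmin_unshift t ! q = unshift_prefix_min t q"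
  unfolding lrmin_unshift_def by (simp del: upt_Suc add: nth_map_upt)

lemma lrmin_unshift_nth_other:
  "q \<le> length t \<Longrightarrow> \<not> (q = 0 \<or> low_lrmin t (q - 1)) \<Longrightarrow> lrmin_unshift t ! q = t!(q - 1) + 1"
  unfolding lrmin_unshift_def by (simp del: upt_Suc add: nth_map_upt)

lemma low_lrmin_less: "low_lrmin t l \<Longrightarrow> p < l \<Longrightarrow> t!l < t!p"
  unfolding low_lrmin_def by blast

lemma unshift_prefix_min_cases:
  obtains (none) "\<And>l. q \<le> l \<Longrightarrow> \<not> low_lrmin t l" "unshift_prefix_min t q = 1"
  | (first) l where "low_lrmin t l" "q \<le> l" "unshift_prefix_min t q = t!l + 1"
      "\<And>l'. q \<le> l' \<Longrightarrow> low_lrmin t l' \<Longrightarrow> l \<le> l'"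
proof (cases "\<exists>l. q \<le> l \<and> low_lrmin t l")
  case True
  let ?l = "LEAST l. q \<le> l \<and> low_lrmin t l"
  have "q \<le> ?l \<and> low_lrmin t ?l" by (rule LeastI_ex[OF True])
  then show thesis
    using first[of ?l] True Least_le[of "\<lambda>l. q \<le> l \<and> low_lrmin t l"]
    unfolding unshift_prefix_min_def by auto
next
  case False
  show thesis by (rule none) (use False in \<open>auto simp: unshift_prefix_min_def\<close>)
qed

lemma unshift_prefix_min_cong:
  assumes "\<And>l. q \<le> l \<and> low_lrmin t l \<longleftrightarrow> q' \<le> l \<and> low_lrmin t l"
  shows "unshift_prefix_min t q = unshift_prefix_min t q'"
proof -
  have "(\<exists>l. q \<le> l \<and> low_lrmin t l) = (\<exists>l. q' \<le> l \<and> low_lrmin t l)" using assms by blast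
  moreover have "(LEAST l. q \<le> l \<and> low_lrmin t l) = (LEAST l. q' \<le> l \<and> low_lrmin t l)"
    using assms by simp
  ultimately show ?thesis unfolding unshift_prefix_min_def by argo
qed

lemma unshift_prefix_min_low:
  assumes "low_lrmin t i"
  shows "unshift_prefix_min t i = t!i + 1"
proof (cases rule: unshift_prefix_min_cases[of i t])
  case (first l)
  then have "l = i" using assms by (meson order.antisym order.refl)
  then show ?thesis using first by simp
qed (use assms in auto)

lemma unshift_prefix_min_le_Suc_nth: "unshift_prefix_min t i \<le> t!i + 1"
proof (cases rule: unshift_prefix_min_cases[of i t])
  case (first l)
  then show ?thesis using low_lrmin_less[of t l i] by (cases "i = l") auto
qed simp

lemma unshift_prefix_min_antimono:
  assumes "q \<le> i"
  shows "unshift_prefix_min t i \<le> unshift_prefix_min t q"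
proof (cases rule: unshift_prefix_min_cases[of i t])
  case (first l)
  then obtain l0 where l0: "low_lrmin t l0" "l0 \<le> l" "unshift_prefix_min t q = t!l0 + 1"
    using assms by (cases rule: unshift_prefix_min_cases[of q t]) auto
  then show ?thesis using first low_lrmin_less[OF first(1), of l0] by (cases "l0 = l") auto
qed (simp add: unshift_prefix_min_def)

lemma unshift_prefix_min_Suc_le:
  assumes "t \<in> perms_of n" "low_lrmin t i"
  shows "unshift_prefix_min t (Suc i) \<le> t!i"
proof (cases rule: unshift_prefix_min_cases[of "Suc i" t])
  case none
  then show ?thesis using assms perms_of_nth_bounds[of t n i] perms_of_length[of t n]
    unfolding low_lrmin_def by simp
next
  case (first l)
  then show ?thesis using low_lrmin_less[OF first(1), of i] by simp
qed

lemma unshift_prefix_min_drop: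
  assumes "t \<in> perms_of n" "low_lrmin t i" "q \<le> i"
  shows "unshift_prefix_min t (Suc i) < unshift_prefix_min t q"
  using unshift_prefix_min_Suc_le[OF assms(1,2)] unshift_prefix_min_low[OF assms(2)]
    unshift_prefix_min_antimono[OF assms(3), of t] by simp

lemma unshift_prefix_min_ge_1: "1 \<le> unshift_prefix_min t q"
  unfolding unshift_prefix_min_def by simp

lemma unshift_prefix_min_le:
  assumes "q < length t"
  shows "unshift_prefix_min t q \<le> length t - q"
proof (cases rule: unshift_prefix_min_cases[of q t])
  case (first l)
  then have "t!l + l < length t" unfolding low_lrmin_def by simp
  then show ?thesis using first by linarith
qed (use assms in simp)

lemma unshift_prefix_min_le_lrmin_unshift:
  assumes "q \<le> i" "i \<le> length t"
  shows "unshift_prefix_min t i \<le> lrmin_unshift t ! q"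
proof (cases "q = 0 \<or> low_lrmin t (q - 1)")
  case True
  then show ?thesis using lrmin_unshift_nth_min unshift_prefix_min_antimono assms by simp
next
  case False
  then have "lrmin_unshift t ! q = t!(q - 1) + 1" using lrmin_unshift_nth_other assms by simp
  moreover have "unshift_prefix_min t i \<le> unshift_prefix_min t (q - 1)"
    using unshift_prefix_min_antimono assms by simp
  ultimately show ?thesis using unshift_prefix_min_le_Suc_nth[of t "q - 1"] by simp
qed

lemma unshift_prefix_min_attained:
  assumes "i \<le> length t"
  obtains q where "q \<le> i" "lrmin_unshift t ! q = unshift_prefix_min t i"
proof (cases "\<exists>l. l < i \<and> low_lrmin t l")
  case True
  define l where "l = Max {l. l < i \<and> low_lrmin t l}"
  have fin: "finite {l. l < i \<and> low_lrmin t l}" by simp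
  have l: "l < i" "low_lrmin t l" unfolding l_def using Max_in[OF fin] True by auto
  have lmax: "l' \<le> l" if "l' < i" "low_lrmin t l'" for l'
    unfolding l_def using Max_ge[OF fin] that by auto
  have "lrmin_unshift t ! Suc l = unshift_prefix_min t (Suc l)"
    using lrmin_unshift_nth_min[of "Suc l" t] l assms by simp
  also have "\<dots> = unshift_prefix_min t i"
  proof (rule unshift_prefix_min_cong)
    fix l' show "Suc l \<le> l' \<and> low_lrmin t l' \<longleftrightarrow> i \<le> l' \<and> low_lrmin t l'"
      using l lmax[of l'] by (cases "l' < i") auto
  qed
  finally show thesis using that[of "Suc l"] l by simp
next
  case False
  have "lrmin_unshift t ! 0 = unshift_prefix_min t 0" using lrmin_unshift_nth_min[of 0 t] by simp
  also have "\<dots> = unshift_prefix_min t i"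
  proof (rule unshift_prefix_min_cong)
    fix l' show "0 \<le> l' \<and> low_lrmin t l' \<longleftrightarrow> i \<le> l' \<and> low_lrmin t l'"
      using False by (cases "l' < i") auto
  qed
  finally show thesis using that[of 0] by simp
qed

lemma prefix_min_lrmin_unshift:
  assumes "i \<le> length t"
  shows "prefix_min (lrmin_unshift t) i = unshift_prefix_min t i"
  unfolding prefix_min_def
proof (rule Min_eqI)
  fix y assume "y \<in> set (take (Suc i) (lrmin_unshift t))"
  then obtain q where "q \<le> i" "y = lrmin_unshift t ! q"
    using assms length_lrmin_unshift[of t] by (auto simp: in_set_conv_nth less_Suc_eq_le)
  then show "unshift_prefix_min t i \<le> y" using unshift_prefix_min_le_lrmin_unshift assms by simp
next
  obtain q where q: "q \<le> i" "lrmin_unshift t ! q = unshift_prefix_min t i"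
    using unshift_prefix_min_attained[OF assms] by blast
  then show "unshift_prefix_min t i \<in> set (take (Suc i) (lrmin_unshift t))"
    using assms length_lrmin_unshift[of t] by (auto simp: in_set_conv_nth intro!: exI[of _ q])
qed simp

lemma lrmin_shift_unshift:
  assumes t: "t \<in> perms_of n"
  shows "lrmin_shift (lrmin_unshift t) = t"
proof (rule nth_equalityI)
  have lt: "length t = n" using t perms_of_length by simp
  then show "length (lrmin_shift (lrmin_unshift t)) = length t"
    using length_lrmin_shift length_lrmin_unshift by simp
  fix i assume "i < length (lrmin_shift (lrmin_unshift t))"
  then have i: "i < n" using length_lrmin_shift length_lrmin_unshift lt by simp
  have shift: "lrmin_shift (lrmin_unshift t) ! i =
      max (lrmin_unshift t ! Suc i) (unshift_prefix_min t i) - 1"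
    using lrmin_shift_nth[of i "lrmin_unshift t"] prefix_min_lrmin_unshift[of i t]
      length_lrmin_unshift[of t] i lt by (simp add: shift_entry_def)
  show "lrmin_shift (lrmin_unshift t) ! i = t ! i"
  proof (cases "low_lrmin t i")
    case True
    then show ?thesis
      using shift lrmin_unshift_nth_min[of "Suc i" t] unshift_prefix_min_low[OF True]
        unshift_prefix_min_Suc_le[OF t True] i lt by simp
  next
    case False
    then show ?thesis
      using shift lrmin_unshift_nth_other[of "Suc i" t] unshift_prefix_min_le_Suc_nth[of t i] i lt
      by simp
  qed
qed

lemma unshift_prefix_min_neq_entry:
  assumes t: "t \<in> perms_of n" and "j < n" "\<not> low_lrmin t j"
  shows "unshift_prefix_min t q \<noteq> t!j + 1"
proof (cases rule: unshift_prefix_min_cases[of q t])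
  case none
  then show ?thesis using perms_of_nth_bounds[OF t \<open>j < n\<close>] by simp
next
  case (first l)
  then have "l \<noteq> j" "l < n" using assms perms_of_length[OF t] unfolding low_lrmin_def by auto
  then show ?thesis
    using first nth_eq_iff_index_eq[OF perms_of_distinct[OF t], of l j] assms perms_of_length[OF t]
    by simp
qed

lemma lrmin_unshift_less_earlier:
  assumes t: "t \<in> perms_of n" and "q \<le> n" "low_lrmin t (q - 1)" "q' < q"
  shows "lrmin_unshift t ! q < lrmin_unshift t ! q'"
proof -
  have "lrmin_unshift t ! q = unshift_prefix_min t (Suc (q - 1))"
    using lrmin_unshift_nth_min[of q t] assms perms_of_length[OF t] by simp
  also have "\<dots> < unshift_prefix_min t q'"
    using unshift_prefix_min_drop[OF t assms(3)] assms(4) by simp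
  also have "\<dots> \<le> lrmin_unshift t ! q'"
    using unshift_prefix_min_le_lrmin_unshift[of q' q' t] assms perms_of_length[OF t] by simp
  finally show ?thesis .
qed

lemma lrmin_unshift_nth_neq:
  assumes t: "t \<in> perms_of n" and q: "q1 < q2" "q2 \<le> n"
  shows "lrmin_unshift t ! q1 \<noteq> lrmin_unshift t ! q2"
proof -
  have lt: "length t = n" using t perms_of_length by simp
  let ?min = "\<lambda>q. q = 0 \<or> low_lrmin t (q - 1)"
  have other: "lrmin_unshift t ! q = t!(q - 1) + 1" "q - 1 < n" if "q \<le> n" "\<not> ?min q" for q
    using lrmin_unshift_nth_other[of q t] that lt by auto
  show ?thesis
  proof (cases "?min q2")
    case True
    then show ?thesis using lrmin_unshift_less_earlier[OF t q(2) _ q(1)] q by auto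
  next
    case False
    show ?thesis
    proof (cases "?min q1")
      case True
      then show ?thesis
        using lrmin_unshift_nth_min[of q1 t] other[OF q(2) False] q lt
          unshift_prefix_min_neq_entry[OF t, of "q2 - 1" q1] False by auto
    next
      case N1: False
      then show ?thesis
        using other[OF _ N1] other[OF q(2) False] q
          nth_eq_iff_index_eq[OF perms_of_distinct[OF t], of "q1 - 1" "q2 - 1"] lt by auto
    qed
  qed
qed

lemma lrmin_unshift_perms_of:
  assumes t: "t \<in> perms_of n"
  shows "lrmin_unshift t \<in> perms_of (Suc n)"
proof (rule perms_ofI)
  have lt: "length t = n" using t perms_of_length by simp
  let ?u = "lrmin_unshift t"
  show len: "length ?u = Suc n" using length_lrmin_unshift lt by simp
  show "distinct ?u" unfolding distinct_conv_nth len
  proof (intro allI impI)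
    fix i j assume "i < Suc n" "j < Suc n" "i \<noteq> j"
    then show "?u ! i \<noteq> ?u ! j"
      using lrmin_unshift_nth_neq[OF t, of i j] lrmin_unshift_nth_neq[OF t, of j i] by (cases "i < j") auto
  qed
  show "\<forall>x\<in>set ?u. 1 \<le> x \<and> x \<le> Suc n"
  proof
    fix x assume "x \<in> set ?u"
    then obtain q where q: "q \<le> n" "x = ?u ! q" using len by (auto simp: in_set_conv_nth less_Suc_eq_le)
    show "1 \<le> x \<and> x \<le> Suc n"
    proof (cases "q = 0 \<or> low_lrmin t (q - 1)")
      case True
      then have "x = unshift_prefix_min t q" using q lrmin_unshift_nth_min[of q t] lt by simp
      moreover have "unshift_prefix_min t q \<le> Suc n"
        using unshift_prefix_min_le[of q t] unshift_prefix_min_def[of t q] lt q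
        by (cases "q < n") (auto simp: low_lrmin_def)
      ultimately show ?thesis using unshift_prefix_min_ge_1 by simp
    next
      case False
      then have "q - 1 < n" using q by linarith
      then show ?thesis
        using False q lrmin_unshift_nth_other[of q t] perms_of_nth_bounds[OF t, of "q - 1"] lt by simp
    qed
  qed
qed

lemma skew_indecomposable_lrmin_unshift:
  assumes t: "t \<in> perms_of n"
  shows "skew_indecomposable (lrmin_unshift t)"
  unfolding skew_indecomposable_def length_lrmin_unshift perms_of_length[OF t]
proof (intro allI impI)
  fix j assume j: "0 < j" "j < Suc n"
  have "j - 1 \<le> length t" using j perms_of_length[OF t] by simp
  then obtain q where "q \<le> j - 1" "lrmin_unshift t ! q = unshift_prefix_min t (j - 1)"
    by (rule unshift_prefix_min_attained)
  then show "\<exists>p<j. lrmin_unshift t ! p \<le> Suc n - j"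
    using unshift_prefix_min_le[of "j - 1" t] j perms_of_length[OF t] by (intro exI[of _ q]) auto
qed

lemma perms_of_later_less_high_lrmin:
  assumes t: "t \<in> perms_of n" and lrmin: "\<forall>p<j. t!j < t!p" and high: "n \<le> t!j + j"
    and "j < l" "l < n"
  shows "t!l < t!j"
proof (rule ccontr)
  assume "\<not> t!l < t!j"
  moreover have "t!l \<noteq> t!j"
    using nth_eq_iff_index_eq[OF perms_of_distinct[OF t], of l j] assms perms_of_length[OF t] by simp
  ultimately have "insert l {..<j} \<subseteq> {q. q < n \<and> t!j < t!q}" using lrmin assms by auto
  then have "card (insert l {..<j}) \<le> card {q. q < n \<and> t!j < t!q}" by (intro card_mono) auto
  also have "\<dots> = n - t!j"
    using card_perms_of_greater[OF t, of "t!j"] perms_of_nth_bounds[OF t, of j] assms by simp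
  finally have "card (insert l {..<j}) \<le> n - t!j" .
  then show False using high \<open>j < l\<close> by simp
qed

lemma free123_lrmin_unshift:
  assumes t: "t \<in> perms_of n" and free: "free123 t"
  shows "free123 (lrmin_unshift t)"
  unfolding free123_def
proof (intro allI impI notI)
  let ?u = "lrmin_unshift t"
  fix a b c assume h: "a < b" "b < c" "c < length ?u" "?u ! a < ?u ! b \<and> ?u ! b < ?u ! c"
  have lt: "length t = n" using t perms_of_length by simp
  have cn: "c \<le> n" using h length_lrmin_unshift lt by simp
  have other: "\<not> (q = 0 \<or> low_lrmin t (q - 1))" if "q \<in> {b, c}" for q
    using lrmin_unshift_less_earlier[OF t, of b a] lrmin_unshift_less_earlier[OF t, of c b] h cn that
    by auto
  define j l where "j = b - 1" and "l = c - 1"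
  have jl: "j < l" "l < n" "b = Suc j" "c = Suc l" using h other cn unfolding j_def l_def by auto
  have "lrmin_unshift t ! b = t!j + 1" "lrmin_unshift t ! c = t!l + 1"
    using lrmin_unshift_nth_other[of b t] lrmin_unshift_nth_other[of c t] other jl lt
    unfolding j_def l_def by auto
  then have "t!j < t!l" using h by simp
  moreover have "\<forall>p<j. t!j < t!p"
  proof (intro allI impI)
    fix p assume "p < j"
    moreover have "t!p \<noteq> t!j"
      using nth_eq_iff_index_eq[OF perms_of_distinct[OF t], of p j] \<open>p < j\<close> jl lt by simp
    ultimately show "t!j < t!p"
      using free \<open>t!j < t!l\<close> jl lt unfolding free123_def by (meson linorder_neqE_nat)
  qed
  moreover have "n \<le> t!j + j" using other[of b] jl lt \<open>\<forall>p<j. t!j < t!p\<close> unfolding low_lrmin_def by auto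
  ultimately show False using perms_of_later_less_high_lrmin[OF t, of j l] jl by simp
qed

lemma low_lrmin_lrmin_shift:
  assumes s: "s \<in> perms_of m" and indec: "skew_indecomposable s" and i: "Suc i < m"
    and lrmin: "s!(Suc i) < prefix_min s i"
  shows "low_lrmin (lrmin_shift s) i"
proof -
  have ls: "length s = m" using s perms_of_length by simp
  have len: "length (lrmin_shift s) = m - 1" using length_lrmin_shift ls by simp
  have shift_i: "lrmin_shift s ! i = prefix_min s i - 1"
    using lrmin_shift_nth[of i s] i lrmin ls by (simp add: shift_entry_def)
  have "lrmin_shift s ! i < lrmin_shift s ! p" if "p < i" for p
  proof -
    have "prefix_min s i \<le> shift_entry s p"
      using prefix_min_antimono[of p i s] that i ls by (simp add: shift_entry_def)
    then have "lrmin_shift s ! i \<le> lrmin_shift s ! p"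
      using shift_i lrmin_shift_nth[of p s] that i ls by simp
    moreover have "lrmin_shift s ! i \<noteq> lrmin_shift s ! p"
      using nth_eq_iff_index_eq[OF perms_of_distinct[OF lrmin_shift_perms_of[OF s]], of i p]
        that i len by simp
    ultimately show ?thesis by simp
  qed
  moreover have "lrmin_shift s ! i + i < length (lrmin_shift s)"
  proof -
    obtain q where "q < Suc i" "s!q \<le> m - Suc i"
      using indec i ls unfolding skew_indecomposable_def by auto
    then have "prefix_min s i \<le> m - Suc i" using prefix_min_le[of q i s] i ls by simp
    then show ?thesis using shift_i len i by simp
  qed
  ultimately show ?thesis unfolding low_lrmin_def using len i by simp
qed

lemma lrmin_of_low_lrmin_shift:
  assumes s: "s \<in> perms_of m" and free: "free123 s" and i: "Suc i < m"
    and low: "low_lrmin (lrmin_shift s) i"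
  shows "s!(Suc i) < prefix_min s i"
proof (rule ccontr)
  assume "\<not> s!(Suc i) < prefix_min s i"
  have ls: "length s = m" using s perms_of_length by simp
  obtain p where p: "p \<le> i" "s!p = prefix_min s i" using prefix_min_attained[of i s] i ls by auto
  moreover have "s!(Suc i) \<noteq> s!p"
    using nth_eq_iff_index_eq[OF perms_of_distinct[OF s], of "Suc i" p] p i ls by simp
  ultimately have gt: "s!p < s!(Suc i)" using \<open>\<not> _ < _\<close> by simp
  then have "lrmin_shift s ! i = s!(Suc i) - 1"
    using lrmin_shift_nth[of i s] p i ls by (simp add: shift_entry_def)
  then have small: "s!(Suc i) + i < m"
    using low length_lrmin_shift[of s] perms_of_nth_bounds[OF s i] ls unfolding low_lrmin_def
    by (simp; arith)
  have "{q. q < m \<and> s!(Suc i) < s!q} \<subseteq> {..i} - {p}"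
  proof
    fix q assume q: "q \<in> {q. q < m \<and> s!(Suc i) < s!q}"
    have "\<not> Suc i < q"
    proof
      assume "Suc i < q"
      moreover have "p < Suc i" "q < length s" "s!(Suc i) < s!q" using p q ls by auto
      ultimately show False using free gt unfolding free123_def by blast
    qed
    then show "q \<in> {..i} - {p}" using q gt by (cases "q = Suc i") auto
  qed
  then have "card {q. q < m \<and> s!(Suc i) < s!q} \<le> card ({..i} - {p})" by (intro card_mono) auto
  then have "m - s!(Suc i) \<le> i"
    using card_perms_of_greater[OF s, of "s!(Suc i)"] perms_of_nth_bounds[OF s i] p by simp
  then show False using small by linarith
qed

lemma unshift_prefix_min_lrmin_shift:
  assumes s: "s \<in> perms_of m" and free: "free123 s" and indec: "skew_indecomposable s"
    and q: "q < m"
  shows "unshift_prefix_min (lrmin_shift s) q = prefix_min s q"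
proof -
  have ls: "length s = m" using s perms_of_length by simp
  have const: "prefix_min s r = prefix_min s q"
    if not_low: "\<And>k. q \<le> k \<Longrightarrow> k < r \<Longrightarrow> \<not> low_lrmin (lrmin_shift s) k"
      and "r < m" "q \<le> r" for r
  proof (rule prefix_min_const)
    fix k assume "q \<le> k" "k < r"
    then have "\<not> low_lrmin (lrmin_shift s) k" "Suc k < m" using not_low \<open>r < m\<close> by auto
    then show "prefix_min s k \<le> s ! Suc k" using low_lrmin_lrmin_shift[OF s indec] not_less by blast
  qed (use that ls in auto)
  show ?thesis
  proof (cases rule: unshift_prefix_min_cases[of q "lrmin_shift s"])
    case none
    then have "prefix_min s (m - 1) = prefix_min s q" using q by (intro const) auto
    then show ?thesis using none prefix_min_last[OF s] q by simp
  next
    case (first l)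
    have lm: "Suc l < m" using first(1) length_lrmin_shift[of s] ls unfolding low_lrmin_def
      by (simp; arith)
    have "lrmin_shift s ! l = prefix_min s l - 1"
      using lrmin_shift_nth[of l s] lrmin_of_low_lrmin_shift[OF s free lm first(1)] lm ls
      by (simp add: shift_entry_def)
    moreover have "1 \<le> prefix_min s l"
    proof -
      obtain p where "p \<le> l" "s!p = prefix_min s l" using prefix_min_attained[of l s] lm ls by auto
      then show ?thesis using perms_of_nth_bounds[OF s, of p] lm by simp
    qed
    moreover have "prefix_min s l = prefix_min s q"
      using first(2,4) lm by (intro const) (auto simp: not_le[symmetric])
    ultimately show ?thesis using first(3) by simp
  qed
qed

lemma lrmin_unshift_shift:
  assumes s: "s \<in> perms_of m" and free: "free123 s" and indec: "skew_indecomposable s"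
    and "1 \<le> m"
  shows "lrmin_unshift (lrmin_shift s) = s"
proof (rule nth_equalityI)
  have ls: "length s = m" using s perms_of_length by simp
  have len: "length (lrmin_shift s) = m - 1" using length_lrmin_shift ls by simp
  show "length (lrmin_unshift (lrmin_shift s)) = length s"
    using length_lrmin_unshift len ls \<open>1 \<le> m\<close> by simp
  fix q assume "q < length (lrmin_unshift (lrmin_shift s))"
  then have q: "q < m" using length_lrmin_unshift len \<open>1 \<le> m\<close> by simp
  show "lrmin_unshift (lrmin_shift s) ! q = s ! q"
  proof (cases "q = 0 \<or> low_lrmin (lrmin_shift s) (q - 1)")
    case True
    then have "lrmin_unshift (lrmin_shift s) ! q = prefix_min s q"
      using lrmin_unshift_nth_min[of q "lrmin_shift s"] unshift_prefix_min_lrmin_shift[OF s free indec q]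
        q len by simp
    moreover have "prefix_min s q = s!q"
    proof (cases "q = 0")
      case True
      then show ?thesis unfolding prefix_min_def using q ls by (cases s) auto
    next
      case False
      then have "s!q < prefix_min s (q - 1)"
        using True lrmin_of_low_lrmin_shift[OF s free, of "q - 1"] q by simp
      then show ?thesis using prefix_min_Suc[of "q - 1" s] False q ls by simp
    qed
    ultimately show ?thesis by simp
  next
    case False
    then have "\<not> s!q < prefix_min s (q - 1)" "q \<noteq> 0"
      using low_lrmin_lrmin_shift[OF s indec, of "q - 1"] q by auto
    then have "lrmin_shift s ! (q - 1) = s!q - 1"
      using lrmin_shift_nth[of "q - 1" s] q ls by (simp add: shift_entry_def)
    then show ?thesis
      using lrmin_unshift_nth_other[of q "lrmin_shift s"] False perms_of_nth_bounds[OF s q] q len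
      by simp
  qed
qed

lemma card_indec_perms_Suc: "card (indec_perms (Suc h) (Suc m)) = card (bounded_perms h m)"
proof -
  have "bij_betw lrmin_shift (indec_perms (Suc h) (Suc m)) (bounded_perms h m)"
  proof (rule bij_betw_byWitness[where f' = lrmin_unshift])
    show "\<forall>s\<in>indec_perms (Suc h) (Suc m). lrmin_unshift (lrmin_shift s) = s"
      using lrmin_unshift_shift unfolding indec_perms_def bounded_perms_def by auto
    show "\<forall>t\<in>bounded_perms h m. lrmin_shift (lrmin_unshift t) = t"
      using lrmin_shift_unshift unfolding bounded_perms_def by auto
    show "lrmin_shift ` indec_perms (Suc h) (Suc m) \<subseteq> bounded_perms h m"
      using lrmin_shift_perms_of free123_lrmin_shift inv_bounded_lrmin_shift
      unfolding indec_perms_def bounded_perms_def by fastforce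
    show "lrmin_unshift ` bounded_perms h m \<subseteq> indec_perms (Suc h) (Suc m)"
      using lrmin_unshift_perms_of free123_lrmin_unshift skew_indecomposable_lrmin_unshift
        inv_bounded_of_lrmin_shift[of "lrmin_unshift _" "Suc m" h] lrmin_shift_unshift
      unfolding indec_perms_def bounded_perms_def by fastforce
  qed
  then show ?thesis by (rule bij_betw_same_card)
qed

section \<open>The base case: 0-bounded permutations\<close>

lemma greater_entries_before_max:
  assumes s: "s \<in> perms_of m" and free: "free123 s" and bd: "inv_bounded 0 s"
    and q: "q < m" "s!q = m" and "p < q"
  shows "{r. r < m \<and> s!p < s!r} \<subseteq> insert q {..<p}"
proof
  fix r assume r: "r \<in> {r. r < m \<and> s!p < s!r}"
  have ls: "length s = m" using s perms_of_length by simp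
  show "r \<in> insert q {..<p}"
  proof (rule ccontr)
    assume "r \<notin> insert q {..<p}"
    then have "p \<le> r" "r \<noteq> q" by auto
    moreover have "r \<noteq> p" using r by auto
    ultimately have "p < r" "r \<noteq> q" by auto
    then have "s!r < m"
      using nth_eq_iff_index_eq[OF perms_of_distinct[OF s], of r q] perms_of_nth_bounds[OF s, of r]
        q r ls by fastforce
    show False
    proof (cases "r < q")
      case True
      then show False using free \<open>p < r\<close> r q \<open>s!r < m\<close> ls unfolding free123_def by auto
    next
      case False
      then have "q < r" using \<open>r \<noteq> q\<close> by simp
      have "p \<in> {p'. p' < q \<and> s!p' < s!r}" using \<open>p < q\<close> r by simp
      then have "lower_left s q r \<noteq> 0" unfolding lower_left_def by (auto simp: card_eq_0_iff)
      then show False using bd \<open>q < r\<close> r q \<open>s!r < m\<close> ls unfolding inv_bounded_def by auto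
    qed
  qed
qed

lemma indec_perms_0_max_last:
  assumes s: "s \<in> indec_perms 0 m" and q: "q < m" "s!q = m"
  shows "q = m - 1"
proof (rule ccontr)
  assume "q \<noteq> m - 1"
  then have "Suc q < m" using q by simp
  have sp: "s \<in> perms_of m" "free123 s" "inv_bounded 0 s" "skew_indecomposable s"
    using s unfolding indec_perms_def bounded_perms_def by auto
  then obtain p where p: "p < Suc q" "s!p \<le> m - Suc q"
    using \<open>Suc q < m\<close> perms_of_length[of s m] unfolding skew_indecomposable_def by auto
  then have "p < q" using q by (cases "p = q") auto
  have "m - s!p = card {r. r < m \<and> s!p < s!r}"
    using card_perms_of_greater[OF sp(1), of "s!p"] perms_of_nth_bounds[OF sp(1), of p] p q by simp
  also have "\<dots> \<le> card (insert q {..<p})"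
    by (rule card_mono) (use greater_entries_before_max[OF sp(1-3) q \<open>p < q\<close>] in auto)
  also have "\<dots> \<le> Suc p" by (simp add: card_insert_le_m1)
  finally show False using p \<open>p < q\<close> \<open>Suc q < m\<close> by linarith
qed

lemma indec_perms_0_last:
  assumes s: "s \<in> indec_perms 0 m" and "1 \<le> m"
  shows "s!(m - 1) = m"
proof -
  have sp: "s \<in> perms_of m" using s unfolding indec_perms_def bounded_perms_def by auto
  then have "m \<in> set s" using assms(2) unfolding perms_of_def by auto
  then obtain q where "q < m" "s!q = m" using perms_of_length[OF sp] by (auto simp: in_set_conv_nth)
  then show ?thesis using indec_perms_0_max_last[OF s] by simp
qed

lemma indec_perms_0_nth:
  assumes s: "s \<in> indec_perms 0 m" and i: "i < m - 1"
  shows "s!i = m - 1 - i"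
proof -
  have sp: "s \<in> perms_of m" "free123 s" "inv_bounded 0 s"
    using s unfolding indec_perms_def bounded_perms_def by auto
  have ls: "length s = m" using sp perms_of_length by simp
  have last: "m - 1 < m" "s!(m - 1) = m" using indec_perms_0_last[OF s] i by auto
  have "s!i \<noteq> m"
    using nth_eq_iff_index_eq[OF perms_of_distinct[OF sp(1)], of i "m - 1"] last i ls by auto
  moreover have "i < m" using i by simp
  ultimately have "s!i < m" using perms_of_nth_bounds[OF sp(1), of i] by simp
  have "insert (m - 1) {..<i} \<subseteq> {r. r < m \<and> s!i < s!r}"
  proof
    fix r assume r: "r \<in> insert (m - 1) {..<i}"
    have "s!i < s!r" if "r < i"
    proof -
      have "s!r \<noteq> s!i" using nth_eq_iff_index_eq[OF perms_of_distinct[OF sp(1)], of r i] that i ls by simp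
      moreover have "\<not> s!r < s!i"
      proof
        assume "s!r < s!i"
        moreover have "r < i" "i < m - 1" "m - 1 < length s" "s!i < s!(m - 1)"
          using that i last \<open>s!i < m\<close> ls by auto
        ultimately show False using sp(2) unfolding free123_def by blast
      qed
      ultimately show ?thesis by simp
    qed
    then show "r \<in> {r. r < m \<and> s!i < s!r}" using r last i \<open>s!i < m\<close> by auto
  qed
  then have "{r. r < m \<and> s!i < s!r} = insert (m - 1) {..<i}"
    using greater_entries_before_max[OF sp last, of i] i by auto
  then have "m - s!i = Suc i"
    using card_perms_of_greater[OF sp(1), of "s!i"] \<open>s!i < m\<close> i by simp
  then show ?thesis by simp
qed

lemma desc_then_max_nth:
  "i < m \<Longrightarrow> (rev [1..<m] @ [m]) ! i = (if i < m - 1 then m - 1 - i else m)"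
  by (auto simp: nth_append rev_nth)

lemma indec_perms_0:
  assumes "1 \<le> m"
  shows "indec_perms 0 m = {rev [1..<m] @ [m]}"
proof
  let ?d = "rev [1..<m] @ [m]"
  have len: "length ?d = m" using assms by simp
  show "indec_perms 0 m \<subseteq> {?d}"
  proof
    fix s assume s: "s \<in> indec_perms 0 m"
    then have "length s = m" unfolding indec_perms_def bounded_perms_def using perms_of_length by auto
    moreover have "s!i = ?d!i" if "i < m" for i
    proof (cases "i < m - 1")
      case True
      then show ?thesis using indec_perms_0_nth[OF s] desc_then_max_nth[OF that] by simp
    next
      case False
      then have "i = m - 1" using that by simp
      then show ?thesis using indec_perms_0_last[OF s assms] desc_then_max_nth[OF that] by simp
    qed
    ultimately show "s \<in> {?d}" using len by (auto intro: nth_equalityI)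
  qed
  have perm: "?d \<in> perms_of m" unfolding perms_of_def using assms by auto
  have free: "free123 ?d" unfolding free123_def len using desc_then_max_nth by auto
  have bd: "inv_bounded 0 ?d" unfolding inv_bounded_def len
  proof (intro allI impI)
    fix a b assume ab: "a < b" "b < m" "?d!b < ?d!a"
    then have "b < m - 1" using desc_then_max_nth[of a m] desc_then_max_nth[of b m] by (auto split: if_splits)
    then have "{p. p < a \<and> ?d!p < ?d!b} = {}" using ab desc_then_max_nth by auto
    then show "lower_left ?d a b \<le> 0" unfolding lower_left_def by simp
  qed
  have indec: "skew_indecomposable ?d" unfolding skew_indecomposable_def len
  proof (intro allI impI)
    fix j assume "0 < j" "j < m"
    then show "\<exists>p<j. ?d!p \<le> m - j" using desc_then_max_nth[of "j - 1" m] by (intro exI[of _ "j - 1"]) auto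
  qed
  show "{?d} \<subseteq> indec_perms 0 m"
    using perm free bd indec unfolding indec_perms_def bounded_perms_def by simp
qed

section \<open>The generating functions\<close>

lemma card_bounded_perms_0: "card (bounded_perms h 0) = 1"
proof -
  have "bounded_perms h 0 = {[]}"
    unfolding bounded_perms_def perms_of_0 free123_def inv_bounded_def by auto
  then show ?thesis by simp
qed

lemma card_bounded_perms_Suc_Suc:
  "card (bounded_perms (Suc h) (Suc n)) =
    (\<Sum>i=0..n. card (bounded_perms h i) * card (bounded_perms (Suc h) (n - i)))"
proof -
  have "card (bounded_perms (Suc h) (Suc n)) =
      (\<Sum>m=Suc 0..Suc n. card (indec_perms (Suc h) m) * card (bounded_perms (Suc h) (Suc n - m)))"
    using card_bounded_perms_skew[of "Suc n"] by simp
  also have "\<dots> = (\<Sum>i=0..n. card (indec_perms (Suc h) (Suc i)) * card (bounded_perms (Suc h) (n - i)))"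
    by (subst sum.shift_bounds_cl_Suc_ivl) simp
  finally show ?thesis using card_indec_perms_Suc by simp
qed

lemma card_bounded_perms_0_Suc: "card (bounded_perms 0 (Suc n)) = 2 ^ n"
proof -
  have rec: "card (bounded_perms 0 (Suc n)) = (\<Sum>j=0..n. card (bounded_perms 0 j))" for n
  proof -
    have "card (bounded_perms 0 (Suc n)) =
        (\<Sum>m=Suc 0..Suc n. card (indec_perms 0 m) * card (bounded_perms 0 (Suc n - m)))"
      using card_bounded_perms_skew[of "Suc n"] by simp
    also have "\<dots> = (\<Sum>i=0..n. card (bounded_perms 0 (n - i)))"
      by (subst sum.shift_bounds_cl_Suc_ivl) (simp add: indec_perms_0)
    also have "\<dots> = (\<Sum>j=0..n. card (bounded_perms 0 j))"
      by (subst sum.atLeastAtMost_rev) simp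
    finally show ?thesis .
  qed
  have "(\<Sum>j=0..n. card (bounded_perms 0 j)) = 2 ^ n" for n
    by (induction n) (simp_all add: card_bounded_perms_0 rec[symmetric])
  then show ?thesis using rec by simp
qed

definition bounded_gf :: "nat \<Rightarrow> rat fps" where
  "bounded_gf h = Abs_fps (\<lambda>n. of_nat (card (bounded_perms h n)))"

lemma gk_eq_bounded_gf: "gk (Suc (Suc h)) = bounded_gf h"
  unfolding gk_def bounded_gf_def Sn_eq_bounded_perms ..

lemma bounded_gf_Suc_rec: "bounded_gf (Suc h) = 1 + fps_X * bounded_gf h * bounded_gf (Suc h)"
proof (rule fps_ext)
  fix n
  show "fps_nth (bounded_gf (Suc h)) n = fps_nth (1 + fps_X * bounded_gf h * bounded_gf (Suc h)) n"
  proof (cases n)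
    case 0
    then show ?thesis unfolding bounded_gf_def using card_bounded_perms_0 by simp
  next
    case (Suc k)
    then have "fps_nth (1 + fps_X * bounded_gf h * bounded_gf (Suc h)) n =
        fps_nth (bounded_gf h * bounded_gf (Suc h)) k"
      by (simp add: mult.assoc)
    also have "\<dots> =
        (\<Sum>i=0..k. of_nat (card (bounded_perms h i)) * of_nat (card (bounded_perms (Suc h) (k - i))))"
      unfolding bounded_gf_def fps_mult_nth by simp
    also have "\<dots> = of_nat (card (bounded_perms (Suc h) n))"
      using card_bounded_perms_Suc_Suc[of h k] Suc by simp
    finally show ?thesis unfolding bounded_gf_def by simp
  qed
qed

lemma bounded_gf_Suc: "bounded_gf (Suc h) = 1 / (1 - fps_X * bounded_gf h)"
proof -
  define a where "a = 1 - fps_X * bounded_gf h"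
  have "a * bounded_gf (Suc h) = 1"
    using bounded_gf_Suc_rec[of h] unfolding a_def by (simp add: algebra_simps)
  then have "inverse a = bounded_gf (Suc h)" by (rule fps_inverse_unique)
  moreover have "fps_nth a 0 \<noteq> 0" unfolding a_def by simp
  ultimately show ?thesis using fps_divide_unit[of a 1] unfolding a_def by simp
qed

lemma bounded_gf_0: "bounded_gf 0 * (1 - 2 * fps_X) = 1 - fps_X"
proof (rule fps_ext)
  fix n
  have e: "bounded_gf 0 * (1 - 2 * fps_X) = bounded_gf 0 - (fps_X * bounded_gf 0 + fps_X * bounded_gf 0)"
    by (simp add: algebra_simps)
  have "fps_nth (bounded_gf 0 * (1 - 2 * fps_X)) n =
      fps_nth (bounded_gf 0) n - (if n = 0 then 0 else 2 * fps_nth (bounded_gf 0) (n - 1))"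
    unfolding e fps_sub_nth fps_add_nth fps_X_mult_nth by simp
  moreover have "fps_nth (bounded_gf 0) n = of_nat (card (bounded_perms 0 n))" for n
    unfolding bounded_gf_def by simp
  ultimately show "fps_nth (bounded_gf 0 * (1 - 2 * fps_X)) n = fps_nth (1 - fps_X) n"
    using card_bounded_perms_0 card_bounded_perms_0_Suc
    by (cases n; cases "n - 1") auto
qed

lemma bounded_gf_1: "bounded_gf 1 = (1 - 2 * fps_X) / (1 - 3 * fps_X + fps_X ^ 2)"
proof -
  define b :: "rat fps" where "b = 1 - 3 * fps_X + fps_X ^ 2"
  have "bounded_gf 1 * b =
      (1 - 2 * fps_X) * (bounded_gf 1 - fps_X * bounded_gf 0 * bounded_gf 1)
      + fps_X * bounded_gf 1 * (bounded_gf 0 * (1 - 2 * fps_X) - (1 - fps_X))"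
    unfolding b_def by (simp add: algebra_simps power2_eq_square)
  also have "\<dots> = 1 - 2 * fps_X"
  proof -
    have "bounded_gf 1 - fps_X * bounded_gf 0 * bounded_gf 1 = 1"
      using bounded_gf_Suc_rec[of 0] by (simp add: algebra_simps)
    then show ?thesis using bounded_gf_0 by simp
  qed
  finally have Gb: "bounded_gf 1 * b = 1 - 2 * fps_X" .
  have "fps_nth b 0 \<noteq> 0" unfolding b_def by simp
  have "(1 - 2 * fps_X) / b = (1 - 2 * fps_X) * inverse b" by (rule fps_divide_unit) fact
  also have "\<dots> = bounded_gf 1 * (b * inverse b)" using Gb by (simp add: mult.assoc)
  also have "\<dots> = bounded_gf 1" using inverse_mult_eq_1'[OF \<open>fps_nth b 0 \<noteq> 0\<close>] by simp
  finally show ?thesis unfolding b_def by simp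
qed

theorem mainTheorem5:
  shows "gk 3 = (1 - 2 * fps_X) / (1 - 3 * fps_X + fps_X ^ 2)
         \<and> (\<forall>k\<ge>4. gk k = 1 / (1 - fps_X * gk (k - 1)))"
proof
  show "gk 3 = (1 - 2 * fps_X) / (1 - 3 * fps_X + fps_X ^ 2)"
    using gk_eq_bounded_gf[of 1] bounded_gf_1 by (simp add: numeral_3_eq_3)
  show "\<forall>k\<ge>4. gk k = 1 / (1 - fps_X * gk (k - 1))"
  proof (intro allI impI)
    fix k :: nat assume "4 \<le> k"
    then have "\<exists>h. k = Suc (Suc (Suc h))" by presburger
    then obtain h where k: "k = Suc (Suc (Suc h))" ..
    show "gk k = 1 / (1 - fps_X * gk (k - 1))"
      unfolding k using bounded_gf_Suc[of h] gk_eq_bounded_gf[of h] gk_eq_bounded_gf[of "Suc h"] by simp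
  qed
qed

end
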